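(* Consider an imprecise hidden Markov model as in the context with fixed output sequence $o_{1:n}$, under the positivity assumption. Let $k\in\{1,\dots,n-1\}$, $z_{k-1}\in\mathcal{X}_{k-1}$ and $s\in\{k,\dots,n\}$, and let $\hat{x}_{k:s-1}$ be any prefix kept while performing the optimal tree construction (for $s=k$ this is the empty sequence). Then there is at least one $x_s\in\mathcal{X}_s$ such that some element of $\mathrm{Mog}(\mathcal{X}_{k:n}\mid z_{k-1},o_{k:n})$ begins with $\hat{x}_{k:s-1}\oplus x_s$ and $\alpha^{\max}_s(x_s)\ge\alpha^{\mathrm{opt}}_k(\hat{x}_{k:s-1}\oplus x_s\mid z_{k-1})$.
   Context: Setting: $n\ge1$; $\mathcal{X}_0=\{x_0\}$ a singleton; finite non-empty $\mathcal{X}_1,\dots,\mathcal{X}_n$, $\mathcal{O}_1,\dots,\mathcal{O}_n$; $\mathcal{X}_{k:\ell}=\times_{r=k}^\ell\mathcal{X}_r$, similarly $\mathcal{O}_{k:\ell}$; $\oplus$ is concatenation. Coherent lower previsions $\underline{P}$: $\underline{P}(f)\ge\min f$, $\underline{P}(\lambda f)=\lambda\underline{P}(f)$ ($\lambda\ge0$), $\underline{P}(f+g)\ge\underline{P}(f)+\underline{P}(g)$; $\overline{P}(f)=-\underline{P}(-f)$; $\underline{P}(A)=\underline{P}(\mathbb{I}_A)$. Local models: coherent $\underline{Q}_k(\cdot\mid z_{k-1})$ on gambles on $\mathcal{X}_k$ and $\underline{S}_k(\cdot\mid z_k)$ on gambles on $\mathcal{O}_k$. Joint models: $\underline{E}_n(\cdot\mid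 z_n):=\underline{S}_n(\cdot\mid z_n)$; for $k<n$, $\underline{E}_k(\cdot\mid X_k)$ is the conditionally independent natural extension of $\underline{S}_k(\cdot\mid X_k)$ and $\underline{P}_{k+1}(\cdot\mid X_k)$ (pointwise smallest separately coherent conditional lower prevision on gambles on $\mathcal{X}_{k+1:n}\times\mathcal{O}_{k:n}$ jointly coherent with and extending both, with $O_k$ and $(X_{k+1:n},O_{k+1:n})$ mutually epistemically irrelevant given $X_k$); $\underline{P}_k(f\mid z_{k-1}):=\underline{Q}_k\big(\sum_{z_k}\mathbb{I}_{\{z_k\}}\underline{E}_k(f(z_k,\cdot)\mid z_k)\mid z_{k-1}\big)$. Positivity: $\overline{Q}_k(\{z_k\}\mid z_{k-1})>0$, $\overline{S}_k(\{o_k\}\mid z_k)>0$ always. $\mathrm{opt}(\mathcal{X}_{k:n}\mid z_{k-1},o_{k:n})$: the $\hat{x}_{k:n}$ with $\underline{P}_k(\mathbb{I}_{o_{k:n}}[\mathbb{I}_{x_{k:n}}-\mathbb{I}_{\hat{x}_{k:n}}]\mid z_{k-1})\le0$ for all $x_{k:n}$. $\alpha_k(z_{k:n}):=\overline{S}_k(\{o_k\}\mid z_k)\prod_{i=k+1}^n\overline{S}_i(\{o_i\}\mid z_i)\overline{Q}_i(\{z_i\}\mid z_{i-1})$, $\beta_k$ the same with lower previsions; $\alpha^{\max}_k(x_k)$, $\beta^{\max}_k(x_k)$ their maxima over $z_{k:n}$ with $z_k=x_k$; $\tau_k(x_k,\hat{x}_k\mid z_{k-1}):=\min\{a\ge0:\underline{Q}_k(\mathbb{I}_{\{x_k\}}-a\mathbb{I}_{\{\hat{x}_k\}}\mid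 z_{k-1})\le0\}$; $\alpha^{\mathrm{opt}}_k(\hat{x}_k\mid z_{k-1}):=\max_{x_k\neq\hat{x}_k}\beta^{\max}_k(x_k)\tau_k(x_k,\hat{x}_k\mid z_{k-1})$ and for $s>k$, $\alpha^{\mathrm{opt}}_k(z_{k:s}\mid z_{k-1}):=\alpha^{\mathrm{opt}}_k(z_{k:s-1}\mid z_{k-1})/(\overline{S}_{s-1}(\{o_{s-1}\}\mid z_{s-1})\overline{Q}_s(\{z_s\}\mid z_{s-1}))$. $\mathrm{Pos}_k(z_{k-1}):=\{z_k:\underline{Q}_k(\{z_k\}\mid z_{k-1})>0,\ \underline{S}_k(\{o_k\}\mid z_k)>0\}$; for $k<n$, $\mathrm{Mog}(\mathcal{X}_{k:n}\mid z_{k-1},o_{k:n}):=\bigcup_{z_k\in\mathrm{Pos}_k(z_{k-1})}z_k\oplus\mathrm{opt}(\mathcal{X}_{k+1:n}\mid z_k,o_{k+1:n})\cup\bigcup_{z_k\notin\mathrm{Pos}_k(z_{k-1})}z_k\oplus\mathcal{X}_{k+1:n}$. Optimal tree construction: keep the $\hat{x}_k$ with $\alpha^{\max}_k(\hat{x}_k)\ge\alpha^{\mathrm{opt}}_k(\hat{x}_k\mid z_{k-1})$; then for $s=k+1,\dots,n$, extend each kept prefix $\hat{x}_{k:s-1}$ by those $x_s$ for which some element of $\mathrm{Mog}(\mathcal{X}_{k:n}\mid z_{k-1},o_{k:n})$ begins with $\hat{x}_{k:s-1}\oplus x_s$ and $\alpha^{\max}_s(x_s)\ge\alpha^{\mathrm{opt}}_k(\hat{x}_{k:s-1}\oplus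 x_s\mid z_{k-1})$. *)

theory Defs
  imports "HOL-Analysis.Analysis"
begin

text \<open>A gamble on a finite set A is represented by a real function on the ambient type;
  a lower prevision on gambles on A is a functional that only depends on the values on A.\<close>

definition coherent_lp :: "'a set \<Rightarrow> (('a \<Rightarrow> real) \<Rightarrow> real) \<Rightarrow> bool" where
  "coherent_lp A P \<longleftrightarrow>
     (\<forall>f g. (\<forall>x\<in>A. f x = g x) \<longrightarrow> P f = P g) \<and>
     (\<forall>f. P f \<ge> Min (f ` A)) \<and>
     (\<forall>f (l::real). l \<ge> 0 \<longrightarrow> P (\<lambda>x. l * f x) = l * P f) \<and>
     (\<forall>f g. P (\<lambda>x. f x + g x) \<ge> P f + P g)"

definition upper :: "(('a \<Rightarrow> real) \<Rightarrow> real) \<Rightarrow> ('a \<Rightarrow> real) \<Rightarrow> real" where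
  "upper P f = - P (\<lambda>x. - f x)"

definition ind :: "'a \<Rightarrow> 'a \<Rightarrow> real" where
  "ind a = (\<lambda>x. if x = a then 1 else 0)"

text \<open>Sequences: seqs A k l is the set of lists z_{k:l} with z_i in A i (empty list if l < k).\<close>

definition seqs :: "(nat \<Rightarrow> 'a set) \<Rightarrow> nat \<Rightarrow> nat \<Rightarrow> 'a list set" where
  "seqs A k l = {xs. length xs = Suc l - k \<and> (\<forall>i<length xs. xs ! i \<in> A (k + i))}"

text \<open>Independent natural extension (de Cooman, Miranda, Zaffalon) of a lower prevision P1 on
  gambles on A and a lower prevision P2 on gambles on B, applied to a gamble f on A x B.\<close>

definition ind_nat_ext :: "'a set \<Rightarrow> 'b set \<Rightarrow> (('a \<Rightarrow> real) \<Rightarrow> real) \<Rightarrow> (('b \<Rightarrow> real) \<Rightarrow> real)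
    \<Rightarrow> ('a \<Rightarrow> 'b \<Rightarrow> real) \<Rightarrow> real" where
  "ind_nat_ext A B P1 P2 f =
     Sup {Min {f a b - (h1 a b - P1 (\<lambda>a'. h1 a' b)) - (h2 a b - P2 (\<lambda>b'. h2 a b')) | a b. a \<in> A \<and> b \<in> B}
          | h1 h2. True}"

text \<open>Q k z_{k-1}: local transition model on gambles on X k; S k z_k: local emission model on
  gambles on Os k. Gambles on X_{k:n} x O_{k:n} are functions of pairs of lists.
  jointP Q S X Os n m z f = P_{n-m}(f | z) (the model E_{n-m} being the independent natural extension
  of S_{n-m} and P_{n-m+1}, and E_n = S_n).\<close>

fun jointP :: "(nat \<Rightarrow> 'x \<Rightarrow> ('x \<Rightarrow> real) \<Rightarrow> real) \<Rightarrow> (nat \<Rightarrow> 'x \<Rightarrow> ('o \<Rightarrow> real) \<Rightarrow> real)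
    \<Rightarrow> (nat \<Rightarrow> 'x set) \<Rightarrow> (nat \<Rightarrow> 'o set) \<Rightarrow> nat \<Rightarrow> nat \<Rightarrow> 'x
    \<Rightarrow> ('x list \<times> 'o list \<Rightarrow> real) \<Rightarrow> real" where
  "jointP Q S X Os n 0 zp f = Q n zp (\<lambda>z. S n z (\<lambda>ob. f ([z], [ob])))"
| "jointP Q S X Os n (Suc m) zp f =
     Q (n - Suc m) zp (\<lambda>z. ind_nat_ext (Os (n - Suc m)) (seqs X (n - m) n \<times> seqs Os (n - m) n)
        (S (n - Suc m) z) (jointP Q S X Os n m z) (\<lambda>ob b. f (z # fst b, ob # snd b)))"

definition lowerP where
  "lowerP Q S X Os n k zp f = jointP Q S X Os n (n - k) zp f"

definition alpha :: "(nat \<Rightarrow> 'x \<Rightarrow> ('x \<Rightarrow> real) \<Rightarrow> real) \<Rightarrow> (nat \<Rightarrow> 'x \<Rightarrow> ('o \<Rightarrow> real) \<Rightarrow> real)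
    \<Rightarrow> (nat \<Rightarrow> 'o) \<Rightarrow> nat \<Rightarrow> nat \<Rightarrow> 'x list \<Rightarrow> real" where
  "alpha Q S obs n k zs = upper (S k (zs ! 0)) (ind (obs k)) *
     (\<Prod>i\<in>{k+1..n}. upper (S i (zs ! (i - k))) (ind (obs i)) *
                     upper (Q i (zs ! (i - k - 1))) (ind (zs ! (i - k))))"

definition beta :: "(nat \<Rightarrow> 'x \<Rightarrow> ('x \<Rightarrow> real) \<Rightarrow> real) \<Rightarrow> (nat \<Rightarrow> 'x \<Rightarrow> ('o \<Rightarrow> real) \<Rightarrow> real)
    \<Rightarrow> (nat \<Rightarrow> 'o) \<Rightarrow> nat \<Rightarrow> nat \<Rightarrow> 'x list \<Rightarrow> real" where
  "beta Q S obs n k zs = S k (zs ! 0) (ind (obs k)) *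
     (\<Prod>i\<in>{k+1..n}. S i (zs ! (i - k)) (ind (obs i)) * Q i (zs ! (i - k - 1)) (ind (zs ! (i - k))))"

definition alpha_max where
  "alpha_max Q S X obs n k x = Max {alpha Q S obs n k zs | zs. zs \<in> seqs X k n \<and> zs ! 0 = x}"

definition beta_max where
  "beta_max Q S X obs n k x = Max {beta Q S obs n k zs | zs. zs \<in> seqs X k n \<and> zs ! 0 = x}"

definition tau :: "(nat \<Rightarrow> 'x \<Rightarrow> ('x \<Rightarrow> real) \<Rightarrow> real) \<Rightarrow> nat \<Rightarrow> 'x \<Rightarrow> 'x \<Rightarrow> 'x \<Rightarrow> real" where
  "tau Q k zp x xh = Inf {a. a \<ge> 0 \<and> Q k zp (\<lambda>y. ind x y - a * ind xh y) \<le> 0}"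

text \<open>Maximum over x_k different from xh; the inserted 0 only matters when X_k = {xh}
  (all candidate values are nonnegative).\<close>
definition alpha_opt1 where
  "alpha_opt1 Q S X obs n k zp xh =
     Max (insert 0 {beta_max Q S X obs n k x * tau Q k zp x xh | x. x \<in> X k \<and> x \<noteq> xh})"

text \<open>alpha_opt for z_{k:s} given as a nonempty list zs of length s - k + 1 (unfolded recursion).\<close>
definition alpha_opt where
  "alpha_opt Q S X obs n k zp zs =
     alpha_opt1 Q S X obs n k zp (zs ! 0) /
     (\<Prod>i\<in>{k+1..k + length zs - 1}. upper (S (i - 1) (zs ! (i - 1 - k))) (ind (obs (i - 1))) *
                                   upper (Q i (zs ! (i - 1 - k))) (ind (zs ! (i - k))))"

definition opt where
  "opt Q S X Os obs n k zp = {xh \<in> seqs X k n. \<forall>x \<in> seqs X k n.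
     lowerP Q S X Os n k zp (\<lambda>(xs, os). (if os = map obs [k..<Suc n] then 1 else 0) *
        ((if xs = x then 1 else 0) - (if xs = xh then 1 else 0))) \<le> 0}"

definition Pos where
  "Pos Q S X obs k zp = {z \<in> X k. Q k zp (ind z) > 0 \<and> S k z (ind (obs k)) > 0}"

definition Mog where
  "Mog Q S X Os obs n k zp =
     {z # y | z y. z \<in> Pos Q S X obs k zp \<and> y \<in> opt Q S X Os obs n (k + 1) z} \<union>
     {z # y | z y. z \<in> X k - Pos Q S X obs k zp \<and> y \<in> seqs X (k + 1) n}"

inductive kept for Q S X Os obs n k zp where
  first: "x \<in> X k \<Longrightarrow> alpha_max Q S X obs n k x \<ge> alpha_opt Q S X obs n k zp [x]
          \<Longrightarrow> kept Q S X Os obs n k zp [x]"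
| extend: "kept Q S X Os obs n k zp p \<Longrightarrow> length p \<le> n - k \<Longrightarrow> x \<in> X (k + length p)
          \<Longrightarrow> (\<exists>r. p @ [x] @ r \<in> Mog Q S X Os obs n k zp)
          \<Longrightarrow> alpha_max Q S X obs n (k + length p) x \<ge> alpha_opt Q S X obs n k zp (p @ [x])
          \<Longrightarrow> kept Q S X Os obs n k zp (p @ [x])"

end

(*
  On gambles of the form I_{o_{j:n}} * c(x_{j:n}) the joint lower previsions factorise along the chain,
  P_j(. | z) = Q_j(u |-> S_j(I_{o_j} * P_{j+1}(. | u)) | z), because the independent natural extension
  of S_j and P_{j+1} reduces to iterated lower previsions on product gambles (shown with mass functions
  dominating a coherent lower prevision, obtained by a finite Hahn-Banach argument).  Hence the upper
  probability of a state path together with the observations is the product of upper transition and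
  emission probabilities along it, and a path of maximal such weight is optimal, also among paths with
  a fixed prefix.  A kept prefix is therefore extended by the first state x_s of a maximal-weight tail:
  the extension stays in Mog, and the alpha-test holds because alpha_max(x_s) dominates that weight.
  For the first state one takes a maximiser of alpha_max(x) * upper Q_k({x} | z_{k-1}) and bounds tau by
  a ratio of upper probabilities.
*)

theory Submission
  imports Defs
begin

section \<open>Coherent lower previsions on a finite domain\<close>

locale coherent_prevision =
  fixes A :: "'a set" and P :: "('a \<Rightarrow> real) \<Rightarrow> real"
  assumes coherent: "coherent_lp A P" and finite_dom: "finite A" and nonempty_dom: "A \<noteq> {}"
begin

lemma cong: "(\<And>x. x \<in> A \<Longrightarrow> f x = g x) \<Longrightarrow> P f = P g"
  using coherent unfolding coherent_lp_def by blast

lemma Min_le: "Min (f ` A) \<le> P f"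
  using coherent unfolding coherent_lp_def by blast

lemma scale: "0 \<le> l \<Longrightarrow> P (\<lambda>x. l * f x) = l * P f"
  using coherent unfolding coherent_lp_def by blast

lemma superadd: "P f + P g \<le> P (\<lambda>x. f x + g x)"
  using coherent unfolding coherent_lp_def by blast

lemma zero: "P (\<lambda>x. 0) = 0"
  using scale[of 0 "\<lambda>x. 0"] by simp

lemma lower_bound: "(\<And>x. x \<in> A \<Longrightarrow> c \<le> f x) \<Longrightarrow> c \<le> P f"
  using Min_le[of f] finite_dom nonempty_dom Min.boundedI[of "f ` A" c] by fastforce

lemma mono: "(\<And>x. x \<in> A \<Longrightarrow> f x \<le> g x) \<Longrightarrow> P f \<le> P g"
  using superadd[of f "\<lambda>x. g x - f x"] lower_bound[of 0 "\<lambda>x. g x - f x"] by simp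

lemma le_const: "c \<le> P (\<lambda>x. c)"
  by (rule lower_bound) simp

lemma add_const: "P (\<lambda>x. f x + c) = P f + c"
proof -
  have "P f + c \<le> P (\<lambda>x. f x + c)"
    using superadd[of f "\<lambda>x. c"] le_const[of c] by linarith
  moreover have "P (\<lambda>x. f x + c) - c \<le> P f"
    using superadd[of "\<lambda>x. f x + c" "\<lambda>x. - c"] le_const[of "- c"] by simp
  ultimately show ?thesis by linarith
qed

lemma le_upper: "P f \<le> upper P f"
  using superadd[of f "\<lambda>x. - f x"] zero unfolding upper_def by simp

lemma upper_subadd: "upper P (\<lambda>x. f x + g x) \<le> upper P f + upper P g"
  using superadd[of "\<lambda>x. - f x" "\<lambda>x. - g x"] unfolding upper_def by simp

lemma add_le_upper: "P (\<lambda>x. f x + g x) \<le> upper P f + P g"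
  using superadd[of "\<lambda>x. f x + g x" "\<lambda>x. - f x"] unfolding upper_def by simp

lemma scale_nonpos: "l \<le> 0 \<Longrightarrow> P (\<lambda>x. l * f x) = l * upper P f"
  using scale[of "- l" "\<lambda>x. - f x"] unfolding upper_def by simp

lemma upper_scale: "0 \<le> l \<Longrightarrow> upper P (\<lambda>x. l * f x) = l * upper P f"
  using scale[of l "\<lambda>x. - f x"] unfolding upper_def by simp

lemma ind_nonneg: "0 \<le> P (ind a)"
  by (rule lower_bound) (simp add: ind_def)

lemma upper_ind_nonneg: "0 \<le> upper P (ind a)"
  using ind_nonneg[of a] le_upper[of "ind a"] by linarith

lemma sum_scale_le:
  "finite I \<Longrightarrow> (\<And>i. i \<in> I \<Longrightarrow> 0 \<le> w i) \<Longrightarrow>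
     (\<Sum>i\<in>I. w i * P (f i)) \<le> P (\<lambda>x. \<Sum>i\<in>I. w i * f i x)"
proof (induction I rule: finite_induct)
  case empty
  show ?case using zero by simp
next
  case (insert i I)
  have "(\<Sum>i\<in>insert i I. w i * P (f i)) \<le> P (\<lambda>x. w i * f i x) + P (\<lambda>x. \<Sum>i\<in>I. w i * f i x)"
    using insert scale[of "w i" "f i"] by simp
  also have "\<dots> \<le> P (\<lambda>x. \<Sum>i\<in>insert i I. w i * f i x)"
    using superadd insert.hyps by simp
  finally show ?case .
qed

lemma ind_diff_le:
  assumes "0 \<le> a" "0 \<le> b"
  shows "P (\<lambda>u. a * ind y u - b * ind w u) \<le> a * upper P (ind y) - b * upper P (ind w)"
  using add_le_upper[of "\<lambda>u. a * ind y u" "\<lambda>u. (- b) * ind w u"]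
    upper_scale[of a "ind y"] scale_nonpos[of "- b" "ind w"] assms by simp

lemma ind_bounds: "0 \<le> P (ind a) \<and> P (ind a) \<le> upper P (ind a)"
  using ind_nonneg le_upper by blast

lemma max_0_single_support:
  assumes "\<And>x. x \<in> A \<Longrightarrow> x \<noteq> v \<Longrightarrow> f x = 0"
  shows "P (\<lambda>x. max (f x) 0) = max (P f) 0"
proof (cases "0 \<le> f v")
  case True
  then have nonneg: "0 \<le> f x" if "x \<in> A" for x using assms[OF that] by (cases "x = v") auto
  then have "P (\<lambda>x. max (f x) 0) = P f" by (intro cong) simp
  moreover have "0 \<le> P f" using nonneg by (rule lower_bound)
  ultimately show ?thesis by simp
next
  case False
  then have nonpos: "f x \<le> 0" if "x \<in> A" for x using assms[OF that] by (cases "x = v") auto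
  then have "P (\<lambda>x. max (f x) 0) = P (\<lambda>x. 0)" by (intro cong) simp
  moreover have "P f \<le> P (\<lambda>x. 0)" using nonpos by (rule mono)
  ultimately show ?thesis using zero by simp
qed

lemma Inf_ratio_le:
  assumes pos: "0 < upper P (ind w)"
  shows "Inf {a. a \<ge> 0 \<and> P (\<lambda>u. ind y u - a * ind w u) \<le> 0} \<le> upper P (ind y) / upper P (ind w)"
proof -
  define a0 where "a0 = upper P (ind y) / upper P (ind w)"
  have a0: "0 \<le> a0" unfolding a0_def using pos upper_ind_nonneg[of y] by simp
  have "P (\<lambda>u. 1 * ind y u - a0 * ind w u) \<le> 1 * upper P (ind y) - a0 * upper P (ind w)"
    using a0 by (intro ind_diff_le) auto
  also have "\<dots> = 0" unfolding a0_def using pos by simp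
  finally show ?thesis
    using a0 unfolding a0_def[symmetric] by (intro cInf_lower) (auto intro: bdd_belowI[of _ 0])
qed

lemma coherent_lp_comp:
  assumes "\<phi> ` A \<subseteq> D" and "finite D"
  shows "coherent_lp D (\<lambda>f. P (\<lambda>x. f (\<phi> x)))"
  unfolding coherent_lp_def
proof (intro conjI allI impI)
  fix f :: "'b \<Rightarrow> real"
  have "Min (f ` D) \<le> Min ((\<lambda>x. f (\<phi> x)) ` A)"
    using assms nonempty_dom by (intro Min_antimono) auto
  then show "Min (f ` D) \<le> P (\<lambda>x. f (\<phi> x))"
    using Min_le[of "\<lambda>x. f (\<phi> x)"] by linarith
qed (use assms in \<open>auto intro: cong simp: scale superadd\<close>)

lemma coherent_lp_compose:
  assumes "finite D" and F: "\<And>u. u \<in> A \<Longrightarrow> coherent_lp D (F u)"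
  shows "coherent_lp D (\<lambda>f. P (\<lambda>u. F u f))"
  unfolding coherent_lp_def
proof (intro conjI allI impI)
  fix f :: "'b \<Rightarrow> real"
  have "P (\<lambda>u. Min (f ` D)) \<le> P (\<lambda>u. F u f)"
    using F by (intro mono) (simp add: coherent_lp_def)
  then show "Min (f ` D) \<le> P (\<lambda>u. F u f)" using le_const[of "Min (f ` D)"] by linarith
next
  fix f g :: "'b \<Rightarrow> real"
  have "P (\<lambda>u. F u f) + P (\<lambda>u. F u g) \<le> P (\<lambda>u. F u f + F u g)" by (rule superadd)
  also have "\<dots> \<le> P (\<lambda>u. F u (\<lambda>x. f x + g x))"
    using F by (intro mono) (simp add: coherent_lp_def)
  finally show "P (\<lambda>u. F u f) + P (\<lambda>u. F u g) \<le> P (\<lambda>u. F u (\<lambda>x. f x + g x))" .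
next
  fix f :: "'b \<Rightarrow> real" and l :: real
  assume "0 \<le> l"
  then have "P (\<lambda>u. F u (\<lambda>x. l * f x)) = P (\<lambda>u. l * F u f)"
    using F by (intro cong) (simp add: coherent_lp_def)
  then show "P (\<lambda>u. F u (\<lambda>x. l * f x)) = l * P (\<lambda>u. F u f)" using scale \<open>0 \<le> l\<close> by simp
qed (use F in \<open>auto intro!: cong simp: coherent_lp_def\<close>)

end

section \<open>Dominating linear previsions\<close>

locale sublinear =
  fixes U :: "('a \<Rightarrow> real) \<Rightarrow> real"
  assumes subadd: "U (\<lambda>x. f x + h x) \<le> U f + U h"
    and scale: "0 \<le> c \<Longrightarrow> U (\<lambda>x. c * f x) = c * U f"
begin

lemma scale_le: "l * U g \<le> U (\<lambda>x. l * g x)"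
proof (cases "0 \<le> l")
  case False
  have "U (\<lambda>x. 0 * g x) \<le> U (\<lambda>x. l * g x) + U (\<lambda>x. (- l) * g x)"
    using subadd[of "\<lambda>x. l * g x" "\<lambda>x. (- l) * g x"] by (simp add: algebra_simps)
  then show ?thesis using False scale[of 0 g] scale[of "- l" g] by simp
qed (simp add: scale)

(* One Hahn-Banach step: the functional f + l g |-> (SUM x:C. p x * f x) + l * U g, dominated by U,
   is to be extended to ind a; an admissible value c lies between the two families below. *)

lemma extension_value_exists:
  assumes dom: "\<And>f l. \<forall>x. x \<notin> C \<longrightarrow> f x = 0 \<Longrightarrow>
      (\<Sum>x\<in>C. p x * f x) + l * U g \<le> U (\<lambda>x. f x + l * g x)"
  obtains c where
    "\<And>f l. \<forall>x. x \<notin> C \<longrightarrow> f x = 0 \<Longrightarrow>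
       (\<Sum>x\<in>C. p x * f x) + l * U g - U (\<lambda>x. f x + l * g x - ind a x) \<le> c"
    "\<And>f l. \<forall>x. x \<notin> C \<longrightarrow> f x = 0 \<Longrightarrow>
       c \<le> U (\<lambda>x. f x + l * g x + ind a x) - ((\<Sum>x\<in>C. p x * f x) + l * U g)"
proof -
  define M where "M f l = (\<Sum>x\<in>C. p x * f x) + l * U g" for f l
  define supp where "supp f \<longleftrightarrow> (\<forall>x. x \<notin> C \<longrightarrow> f x = 0)" for f :: "'a \<Rightarrow> real"
  define L where "L = {M f l - U (\<lambda>x. f x + l * g x - ind a x) | f l. supp f}"
  have key: "M f1 l1 - U (\<lambda>x. f1 x + l1 * g x - ind a x) \<le> U (\<lambda>x. f2 x + l2 * g x + ind a x) - M f2 l2"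
    if "supp f1" "supp f2" for f1 l1 f2 l2
  proof -
    have "M f1 l1 + M f2 l2 = M (\<lambda>x. f1 x + f2 x) (l1 + l2)"
      unfolding M_def by (simp add: algebra_simps sum.distrib)
    also have "\<dots> \<le> U (\<lambda>x. (f1 x + l1 * g x - ind a x) + (f2 x + l2 * g x + ind a x))"
      using dom[of "\<lambda>x. f1 x + f2 x" "l1 + l2"] that unfolding M_def supp_def
      by (simp add: algebra_simps)
    also have "\<dots> \<le> U (\<lambda>x. f1 x + l1 * g x - ind a x) + U (\<lambda>x. f2 x + l2 * g x + ind a x)"
      by (rule subadd)
    finally show ?thesis by simp
  qed
  have supp0: "supp (\<lambda>_. 0)" unfolding supp_def by simp
  have bdd: "bdd_above L"
    unfolding L_def using key[OF _ supp0] by (intro bdd_aboveI) blast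
  show ?thesis
  proof (rule that)
    fix f :: "'a \<Rightarrow> real" and l
    assume "\<forall>x. x \<notin> C \<longrightarrow> f x = 0"
    then have f: "supp f" unfolding supp_def .
    have "M f l - U (\<lambda>x. f x + l * g x - ind a x) \<le> Sup L"
      using bdd f unfolding L_def by (intro cSup_upper) blast+
    then show "(\<Sum>x\<in>C. p x * f x) + l * U g - U (\<lambda>x. f x + l * g x - ind a x) \<le> Sup L"
      unfolding M_def .
    have "Sup L \<le> U (\<lambda>x. f x + l * g x + ind a x) - M f l"
      using key[OF _ f] supp0 unfolding L_def by (intro cSup_least) blast+
    then show "Sup L \<le> U (\<lambda>x. f x + l * g x + ind a x) - ((\<Sum>x\<in>C. p x * f x) + l * U g)"
      unfolding M_def .
  qed
qed

(* Scaling by |t| turns the two bounds into the value t * c on t * ind a. *)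

lemma extension_step:
  assumes dom: "\<And>f l. \<forall>x. x \<notin> C \<longrightarrow> f x = 0 \<Longrightarrow>
      (\<Sum>x\<in>C. p x * f x) + l * U g \<le> U (\<lambda>x. f x + l * g x)"
  shows "\<exists>c. \<forall>f l t. (\<forall>x. x \<notin> C \<longrightarrow> f x = 0) \<longrightarrow>
      (\<Sum>x\<in>C. p x * f x) + l * U g + t * c \<le> U (\<lambda>x. f x + l * g x + t * ind a x)"
proof -
  define M where "M f l = (\<Sum>x\<in>C. p x * f x) + l * U g" for f l
  define supp where "supp f \<longleftrightarrow> (\<forall>x. x \<notin> C \<longrightarrow> f x = 0)" for f :: "'a \<Rightarrow> real"
  have M_scale: "M (\<lambda>x. f x / r) (l / r) = M f l / r" for f l r
    unfolding M_def by (simp add: sum_divide_distrib add_divide_distrib)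
  obtain c where
    lo: "\<And>f l. supp f \<Longrightarrow> M f l - U (\<lambda>x. f x + l * g x - ind a x) \<le> c" and
    hi: "\<And>f l. supp f \<Longrightarrow> c \<le> U (\<lambda>x. f x + l * g x + ind a x) - M f l"
    using extension_value_exists[OF dom, where a = a] unfolding M_def supp_def by blast
  have "M f l + t * c \<le> U (\<lambda>x. f x + l * g x + t * ind a x)" if f: "supp f" for f l t
  proof (cases t "0 :: real" rule: linorder_cases)
    case equal
    then show ?thesis using dom f unfolding M_def supp_def by simp
  next
    case greater
    have "(\<lambda>x. t * (f x / t + l / t * g x + ind a x)) = (\<lambda>x. f x + l * g x + t * ind a x)"
      using greater by (intro ext) (simp add: field_simps)
    then have eq: "t * U (\<lambda>x. f x / t + l / t * g x + ind a x) = U (\<lambda>x. f x + l * g x + t * ind a x)"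
      using scale[of t "\<lambda>x. f x / t + l / t * g x + ind a x"] greater by simp
    have "supp (\<lambda>x. f x / t)" using f unfolding supp_def by simp
    from hi[OF this, of "l / t"] greater
    have "t * c \<le> t * U (\<lambda>x. f x / t + l / t * g x + ind a x) - M f l"
      by (simp add: M_scale field_simps)
    then show ?thesis using eq by simp
  next
    case less
    define r where "r = - t"
    have r: "0 < r" using less unfolding r_def by simp
    have "(\<lambda>x. r * (f x / r + l / r * g x - ind a x)) = (\<lambda>x. f x + l * g x + t * ind a x)"
      using r by (intro ext) (simp add: field_simps r_def)
    then have eq: "r * U (\<lambda>x. f x / r + l / r * g x - ind a x) = U (\<lambda>x. f x + l * g x + t * ind a x)"
      using scale[of r "\<lambda>x. f x / r + l / r * g x - ind a x"] r by simp
    have "supp (\<lambda>x. f x / r)" using f unfolding supp_def by simp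
    from lo[OF this, of "l / r"] r
    have "M f l - r * U (\<lambda>x. f x / r + l / r * g x - ind a x) \<le> r * c"
      by (simp add: M_scale field_simps)
    then show ?thesis using eq unfolding r_def by simp
  qed
  then show ?thesis unfolding M_def supp_def by blast
qed

lemma finite_extension:
  assumes "finite C"
  shows "\<exists>p. \<forall>f l. (\<forall>x. x \<notin> C \<longrightarrow> f x = 0) \<longrightarrow>
      (\<Sum>x\<in>C. p x * f x) + l * U g \<le> U (\<lambda>x. f x + l * g x)"
  using assms
proof (induction C rule: finite_induct)
  case empty
  have "(\<lambda>x. f x + l * g x) = (\<lambda>x. l * g x)" if "\<forall>x. f x = 0" for f :: "'a \<Rightarrow> real" and l
    using that by simp
  then show ?case using scale_le by auto
next
  case (insert a C)
  then obtain p where "\<forall>f l. (\<forall>x. x \<notin> C \<longrightarrow> f x = 0) \<longrightarrow>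
      (\<Sum>x\<in>C. p x * f x) + l * U g \<le> U (\<lambda>x. f x + l * g x)" by blast
  then obtain c where c: "\<And>f l t. \<forall>x. x \<notin> C \<longrightarrow> f x = 0 \<Longrightarrow>
      (\<Sum>x\<in>C. p x * f x) + l * U g + t * c \<le> U (\<lambda>x. f x + l * g x + t * ind a x)"
    using extension_step by blast
  have "(\<Sum>x\<in>insert a C. (p(a := c)) x * f x) + l * U g \<le> U (\<lambda>x. f x + l * g x)"
    if f: "\<forall>x. x \<notin> insert a C \<longrightarrow> f x = 0" for f l
  proof -
    have "(\<Sum>x\<in>C. (p(a := c)) x * f x) = (\<Sum>x\<in>C. p x * (f(a := 0)) x)"
      using insert.hyps by (intro sum.cong) auto
    then have "(\<Sum>x\<in>insert a C. (p(a := c)) x * f x) = (\<Sum>x\<in>C. p x * (f(a := 0)) x) + f a * c"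
      using insert.hyps by (simp add: mult.commute)
    moreover have "(\<lambda>x. f x + l * g x) = (\<lambda>x. (f(a := 0)) x + l * g x + f a * ind a x)"
      by (auto simp: ind_def)
    moreover have "\<forall>x. x \<notin> C \<longrightarrow> (f(a := 0)) x = 0" using f by simp
    ultimately show ?thesis using c[of "f(a := 0)" l "f a"] by (simp add: ac_simps)
  qed
  then show ?case by blast
qed

end

context coherent_prevision
begin

lemma dominating_pmf:
  "\<exists>p. (\<forall>a\<in>A. 0 \<le> p a) \<and> sum p A = 1 \<and> (\<forall>f. P f \<le> (\<Sum>a\<in>A. p a * f a)) \<and>
       P g = (\<Sum>a\<in>A. p a * g a)"
proof -
  interpret U: sublinear "upper P"
    by unfold_locales (simp_all add: upper_subadd upper_scale)
  obtain p where p: "\<And>f l. \<forall>x. x \<notin> A \<longrightarrow> f x = 0 \<Longrightarrow>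
      (\<Sum>x\<in>A. p x * f x) + l * upper P (\<lambda>x. - g x) \<le> upper P (\<lambda>x. f x + l * - g x)"
    using U.finite_extension[OF finite_dom, of "\<lambda>x. - g x"] by blast
  have dominated: "P f \<le> (\<Sum>a\<in>A. p a * f a)" for f
  proof -
    have "upper P (\<lambda>x. (if x \<in> A then - f x else 0) + 0 * - g x) = - P f"
      unfolding upper_def by (simp, intro arg_cong[where f = uminus] cong) auto
    then show ?thesis
      using p[of "\<lambda>x. if x \<in> A then - f x else 0" 0] by (simp add: sum_negf)
  qed
  have "(\<Sum>a\<in>A. p a * g a) \<le> P g"
  proof -
    have "upper P (\<lambda>x. (if x \<in> A then g x else 0) + 1 * - g x) = - P (\<lambda>x. 0)"
      unfolding upper_def by (simp, intro arg_cong[where f = uminus] cong) auto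
    then show ?thesis
      using p[of "\<lambda>x. if x \<in> A then g x else 0" 1] zero unfolding upper_def by simp
  qed
  moreover have "0 \<le> p a" if "a \<in> A" for a
    using dominated[of "ind a"] ind_nonneg[of a] that finite_dom
    by (simp add: ind_def if_distrib cong: if_cong)
  moreover have "sum p A = 1"
    using dominated[of "\<lambda>x. 1"] dominated[of "\<lambda>x. - 1"] le_const[of 1] le_const[of "- 1"]
    by (simp add: sum_negf)
  ultimately show ?thesis using dominated by (intro exI[of _ p]) (auto intro: order.antisym)
qed

end

section \<open>The independent natural extension\<close>

locale indep_natural_extension =
  P1: coherent_prevision A P1 + P2: coherent_prevision B P2
  for A :: "'a set" and P1 and B :: "'b set" and P2
begin

abbreviation E :: "('a \<Rightarrow> 'b \<Rightarrow> real) \<Rightarrow> real" where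
  "E \<equiv> ind_nat_ext A B P1 P2"

definition candidate where
  "candidate h1 h2 f = Min {f a b - (h1 a b - P1 (\<lambda>a'. h1 a' b)) - (h2 a b - P2 (\<lambda>b'. h2 a b'))
                            | a b. a \<in> A \<and> b \<in> B}"

lemma E_eq_Sup: "E f = Sup {candidate h1 h2 f | h1 h2. True}"
  unfolding ind_nat_ext_def candidate_def ..

lemma pairs_eq_image: "{F a b | a b. a \<in> A \<and> b \<in> B} = (\<lambda>(a, b). F a b) ` (A \<times> B)"
  by auto

lemma finite_pairs: "finite {F a b | a b. a \<in> A \<and> b \<in> B}"
  and pairs_nonempty: "{F a b | a b. a \<in> A \<and> b \<in> B} \<noteq> {}"
  unfolding pairs_eq_image using P1.finite_dom P2.finite_dom P1.nonempty_dom P2.nonempty_dom by auto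

lemma Min_pairs_le: "a \<in> A \<Longrightarrow> b \<in> B \<Longrightarrow> Min {F a b | a b. a \<in> A \<and> b \<in> B} \<le> F a b"
  using finite_pairs by (intro Min_le) auto

lemma le_Min_pairs:
  "(\<And>a b. a \<in> A \<Longrightarrow> b \<in> B \<Longrightarrow> c \<le> F a b) \<Longrightarrow> c \<le> Min {F a b | a b. a \<in> A \<and> b \<in> B}"
  using finite_pairs pairs_nonempty by (intro Min.boundedI) auto

(* Averaging with a mass function p dominating P1 removes the h1-term, and P2 removes the h2-term. *)

lemma candidate_le_pmf:
  assumes p0: "\<forall>a\<in>A. 0 \<le> p a" and p1: "sum p A = 1" and pd: "\<forall>f. P1 f \<le> (\<Sum>a\<in>A. p a * f a)"
  shows "candidate h1 h2 f \<le> P2 (\<lambda>b. \<Sum>a\<in>A. p a * f a b)"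
proof -
  define e where "e = candidate h1 h2 f"
  define g1 where "g1 a b = h1 a b - P1 (\<lambda>a'. h1 a' b)" for a b
  define g2 where "g2 a b = h2 a b - P2 (\<lambda>b'. h2 a b')" for a b
  have e: "e \<le> f a b - g1 a b - g2 a b" if "a \<in> A" "b \<in> B" for a b
    unfolding e_def candidate_def g1_def g2_def using that by (rule Min_pairs_le)
  have g1: "0 \<le> (\<Sum>a\<in>A. p a * g1 a b)" for b
  proof -
    have "P1 (\<lambda>a. g1 a b) = 0"
      unfolding g1_def using P1.add_const[of "\<lambda>a. h1 a b" "- P1 (\<lambda>a'. h1 a' b)"] by simp
    then show ?thesis using pd[rule_format, of "\<lambda>a. g1 a b"] by simp
  qed
  have g2: "P2 (\<lambda>b. g2 a b) = 0" for a
    unfolding g2_def using P2.add_const[of "\<lambda>b. h2 a b" "- P2 (\<lambda>b'. h2 a b')"] by simp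
  have "(\<Sum>a\<in>A. p a * g2 a b) + e \<le> (\<Sum>a\<in>A. p a * f a b)" if b: "b \<in> B" for b
  proof -
    have "(\<Sum>a\<in>A. p a * (e + g1 a b + g2 a b)) \<le> (\<Sum>a\<in>A. p a * f a b)"
      using e b p0 by (intro sum_mono mult_left_mono) (auto simp: algebra_simps)
    moreover have "(\<Sum>a\<in>A. p a * (e + g1 a b + g2 a b)) =
        e * sum p A + (\<Sum>a\<in>A. p a * g1 a b) + (\<Sum>a\<in>A. p a * g2 a b)"
      by (simp add: algebra_simps sum.distrib sum_distrib_left sum_distrib_right)
    ultimately show ?thesis using g1[of b] p1 by simp
  qed
  then have "P2 (\<lambda>b. (\<Sum>a\<in>A. p a * g2 a b) + e) \<le> P2 (\<lambda>b. \<Sum>a\<in>A. p a * f a b)"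
    by (rule P2.mono)
  then have "P2 (\<lambda>b. \<Sum>a\<in>A. p a * g2 a b) + e \<le> P2 (\<lambda>b. \<Sum>a\<in>A. p a * f a b)"
    using P2.add_const[of "\<lambda>b. \<Sum>a\<in>A. p a * g2 a b" e] by simp
  moreover have "(\<Sum>a\<in>A. p a * P2 (\<lambda>b. g2 a b)) \<le> P2 (\<lambda>b. \<Sum>a\<in>A. p a * g2 a b)"
    using P2.sum_scale_le[of A p "\<lambda>a b. g2 a b"] P1.finite_dom p0 by auto
  ultimately show ?thesis using g2 unfolding e_def by simp
qed

lemma exists_dominating_pmf:
  "\<exists>p. (\<forall>a\<in>A. 0 \<le> p a) \<and> sum p A = 1 \<and> (\<forall>f. P1 f \<le> (\<Sum>a\<in>A. p a * f a))"
  using P1.dominating_pmf by blast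

lemma bdd_above_candidates: "bdd_above {candidate h1 h2 f | h1 h2. True}"
proof -
  obtain p where "\<forall>a\<in>A. 0 \<le> p a" "sum p A = 1" "\<forall>f. P1 f \<le> (\<Sum>a\<in>A. p a * f a)"
    using exists_dominating_pmf by blast
  then show ?thesis using candidate_le_pmf
    by (intro bdd_aboveI[of _ "P2 (\<lambda>b. \<Sum>a\<in>A. p a * f a b)"]) blast
qed

lemma candidate_le: "candidate h1 h2 f \<le> E f"
  unfolding E_eq_Sup using bdd_above_candidates by (intro cSup_upper) blast+

lemma le_pmf:
  assumes "\<forall>a\<in>A. 0 \<le> p a" "sum p A = 1" "\<forall>f. P1 f \<le> (\<Sum>a\<in>A. p a * f a)"
  shows "E f \<le> P2 (\<lambda>b. \<Sum>a\<in>A. p a * f a b)"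
  unfolding E_eq_Sup by (rule cSup_least) (use candidate_le_pmf[OF assms] in auto)

lemma cong: "(\<And>a b. a \<in> A \<Longrightarrow> b \<in> B \<Longrightarrow> f a b = g a b) \<Longrightarrow> E f = E g"
proof -
  assume "\<And>a b. a \<in> A \<Longrightarrow> b \<in> B \<Longrightarrow> f a b = g a b"
  then have "candidate h1 h2 f = candidate h1 h2 g" for h1 h2
    unfolding candidate_def pairs_eq_image by (intro arg_cong[where f = Min] image_cong) auto
  then show ?thesis unfolding E_eq_Sup by simp
qed

lemma Min_le: "Min {f a b | a b. a \<in> A \<and> b \<in> B} \<le> E f"
  using candidate_le[of "\<lambda>a b. 0" "\<lambda>a b. 0" f] P1.zero P2.zero unfolding candidate_def by simp

lemma superadd: "E f + E g \<le> E (\<lambda>a b. f a b + g a b)"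
proof -
  have candidate_add: "candidate h1 h2 f + candidate h1' h2' g \<le> E (\<lambda>a b. f a b + g a b)"
    for h1 h2 h1' h2'
  proof -
    have "candidate h1 h2 f + candidate h1' h2' g \<le>
        candidate (\<lambda>a b. h1 a b + h1' a b) (\<lambda>a b. h2 a b + h2' a b) (\<lambda>a b. f a b + g a b)"
      unfolding candidate_def
    proof (rule le_Min_pairs)
      fix a b assume ab: "a \<in> A" "b \<in> B"
      show "Min {f a b - (h1 a b - P1 (\<lambda>a'. h1 a' b)) - (h2 a b - P2 (\<lambda>b'. h2 a b')) |a b. a \<in> A \<and> b \<in> B} +
         Min {g a b - (h1' a b - P1 (\<lambda>a'. h1' a' b)) - (h2' a b - P2 (\<lambda>b'. h2' a b')) |a b. a \<in> A \<and> b \<in> B}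
         \<le> f a b + g a b - (h1 a b + h1' a b - P1 (\<lambda>a'. h1 a' b + h1' a' b)) -
            (h2 a b + h2' a b - P2 (\<lambda>b'. h2 a b' + h2' a b'))"
        using P1.superadd[of "\<lambda>a'. h1 a' b" "\<lambda>a'. h1' a' b"]
          P2.superadd[of "\<lambda>b'. h2 a b'" "\<lambda>b'. h2' a b'"]
          Min_pairs_le[OF ab, of "\<lambda>a b. f a b - (h1 a b - P1 (\<lambda>a'. h1 a' b)) - (h2 a b - P2 (\<lambda>b'. h2 a b'))"]
          Min_pairs_le[OF ab, of "\<lambda>a b. g a b - (h1' a b - P1 (\<lambda>a'. h1' a' b)) - (h2' a b - P2 (\<lambda>b'. h2' a b'))"]
        by linarith
    qed
    also have "\<dots> \<le> E (\<lambda>a b. f a b + g a b)" by (rule candidate_le)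
    finally show ?thesis .
  qed
  have ne: "{candidate h1 h2 f | h1 h2. True} \<noteq> {}" for f by auto
  have "E f \<le> E (\<lambda>a b. f a b + g a b) - candidate h1' h2' g" for h1' h2'
    unfolding E_eq_Sup[of f] using candidate_add[of _ _ h1' h2']
    by (intro cSup_least[OF ne]) (auto simp: algebra_simps)
  then have "E g \<le> E (\<lambda>a b. f a b + g a b) - E f"
    unfolding E_eq_Sup[of g] by (intro cSup_least[OF ne]) (auto simp: algebra_simps)
  then show ?thesis by simp
qed

lemma candidate_scale:
  assumes l: "0 < l"
  shows "candidate (\<lambda>a b. l * h1 a b) (\<lambda>a b. l * h2 a b) (\<lambda>a b. l * f a b) = l * candidate h1 h2 f"
proof -
  let ?F = "\<lambda>a b. f a b - (h1 a b - P1 (\<lambda>a'. h1 a' b)) - (h2 a b - P2 (\<lambda>b'. h2 a b'))"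
  have "{l * f a b - (l * h1 a b - P1 (\<lambda>a'. l * h1 a' b)) - (l * h2 a b - P2 (\<lambda>b'. l * h2 a b'))
         | a b. a \<in> A \<and> b \<in> B} = (\<lambda>x. l * x) ` {?F a b | a b. a \<in> A \<and> b \<in> B}"
    unfolding pairs_eq_image image_image using l P1.scale[of l] P2.scale[of l]
    by (intro image_cong) (auto simp: algebra_simps)
  moreover have "Min ((\<lambda>x. l * x) ` {?F a b | a b. a \<in> A \<and> b \<in> B}) = l * Min {?F a b | a b. a \<in> A \<and> b \<in> B}"
    using l finite_pairs pairs_nonempty
    by (intro mono_Min_commute[symmetric]) (auto simp: mono_def mult_left_mono)
  ultimately show ?thesis unfolding candidate_def by simp
qed

lemma zero: "E (\<lambda>a b. 0) = 0"
proof -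
  obtain p where p: "\<forall>a\<in>A. 0 \<le> p a" "sum p A = 1" "\<forall>f. P1 f \<le> (\<Sum>a\<in>A. p a * f a)"
    using exists_dominating_pmf by blast
  have "Min {(\<lambda>a b. 0::real) a b | a b. a \<in> A \<and> b \<in> B} = 0"
    using pairs_nonempty[of "\<lambda>a b. 0"] by (intro Min_eqI) (auto simp: finite_pairs)
  then show ?thesis
    using le_pmf[OF p, of "\<lambda>a b. 0"] Min_le[of "\<lambda>a b. 0"] P2.zero by simp
qed

lemma scale:
  assumes l0: "0 \<le> l"
  shows "E (\<lambda>a b. l * f a b) = l * E f"
proof (cases "l = 0")
  case False
  then have l: "0 < l" using l0 by simp
  have ne: "{candidate h1 h2 f | h1 h2. True} \<noteq> {}" for f by auto
  have "E (\<lambda>a b. l * f a b) \<le> l * E f"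
    unfolding E_eq_Sup[of "\<lambda>a b. l * f a b"]
  proof (rule cSup_least[OF ne])
    fix x assume "x \<in> {candidate h1 h2 (\<lambda>a b. l * f a b) |h1 h2. True}"
    then obtain h1 h2 where "x = candidate h1 h2 (\<lambda>a b. l * f a b)" by blast
    also have "\<dots> = candidate (\<lambda>a b. l * (h1 a b / l)) (\<lambda>a b. l * (h2 a b / l)) (\<lambda>a b. l * f a b)"
      using l by simp
    also have "\<dots> = l * candidate (\<lambda>a b. h1 a b / l) (\<lambda>a b. h2 a b / l) f"
      using l by (rule candidate_scale)
    also have "\<dots> \<le> l * E f" using l by (intro mult_left_mono candidate_le) auto
    finally show "x \<le> l * E f" .
  qed
  moreover have "E f \<le> E (\<lambda>a b. l * f a b) / l"
    unfolding E_eq_Sup[of f]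
  proof (rule cSup_least[OF ne])
    fix x assume "x \<in> {candidate h1 h2 f |h1 h2. True}"
    then obtain h1 h2 where x: "x = candidate h1 h2 f" by blast
    have "l * x = candidate (\<lambda>a b. l * h1 a b) (\<lambda>a b. l * h2 a b) (\<lambda>a b. l * f a b)"
      unfolding x using l by (simp add: candidate_scale)
    also have "\<dots> \<le> E (\<lambda>a b. l * f a b)" by (rule candidate_le)
    finally show "x \<le> E (\<lambda>a b. l * f a b) / l" using l by (simp add: field_simps)
  qed
  ultimately show ?thesis using l by (simp add: field_simps)
qed (simp add: zero)

(* The candidate built from P2 g gives the lower bound; a mass function dominating P1 and attaining
   P1 (%a. h a * P2 g) gives the upper bound. *)
lemma product:
  assumes h: "\<And>a. a \<in> A \<Longrightarrow> 0 \<le> h a"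
  shows "E (\<lambda>a b. h a * g b) = P1 (\<lambda>a. h a * P2 g)"
proof (rule order.antisym)
  obtain p where p0: "\<forall>a\<in>A. 0 \<le> p a" and p1: "sum p A = 1"
    and pd: "\<forall>f. P1 f \<le> (\<Sum>a\<in>A. p a * f a)" and pa: "P1 (\<lambda>a. h a * P2 g) = (\<Sum>a\<in>A. p a * (h a * P2 g))"
    using P1.dominating_pmf[of "\<lambda>a. h a * P2 g"] by blast
  have "E (\<lambda>a b. h a * g b) \<le> P2 (\<lambda>b. (\<Sum>a\<in>A. p a * h a) * g b)"
    using le_pmf[OF p0 p1 pd, of "\<lambda>a b. h a * g b"] by (simp add: sum_distrib_right mult.assoc)
  also have "\<dots> = (\<Sum>a\<in>A. p a * h a) * P2 g" using p0 h by (intro P2.scale sum_nonneg) auto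
  finally show "E (\<lambda>a b. h a * g b) \<le> P1 (\<lambda>a. h a * P2 g)"
    unfolding pa by (simp add: sum_distrib_right mult.assoc)
next
  have "P2 (\<lambda>b'. h a * g b') = h a * P2 g" if "a \<in> A" for a using h[OF that] by (rule P2.scale)
  then have "{h a * g b - (h a * P2 g - P1 (\<lambda>a'. h a' * P2 g)) - (h a * g b - P2 (\<lambda>b'. h a * g b'))
              | a b. a \<in> A \<and> b \<in> B} = (\<lambda>(a, b). P1 (\<lambda>a. h a * P2 g)) ` (A \<times> B)"
    unfolding pairs_eq_image by (intro image_cong) auto
  also have "\<dots> = {P1 (\<lambda>a. h a * P2 g)}" using P1.nonempty_dom P2.nonempty_dom by auto
  finally have "candidate (\<lambda>a b. h a * P2 g) (\<lambda>a b. h a * g b) (\<lambda>a b. h a * g b) = P1 (\<lambda>a. h a * P2 g)"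
    unfolding candidate_def by simp
  then show "P1 (\<lambda>a. h a * P2 g) \<le> E (\<lambda>a b. h a * g b)"
    using candidate_le[of "\<lambda>a b. h a * P2 g" "\<lambda>a b. h a * g b" "\<lambda>a b. h a * g b"] by simp
qed


lemma coherent_lp_comp:
  assumes \<phi>: "\<And>a b. a \<in> A \<Longrightarrow> b \<in> B \<Longrightarrow> \<phi> a b \<in> D" and "finite D"
  shows "coherent_lp D (\<lambda>f. E (\<lambda>a b. f (\<phi> a b)))"
  unfolding coherent_lp_def
proof (intro conjI allI impI)
  fix f g :: "'c \<Rightarrow> real"
  assume "\<forall>x\<in>D. f x = g x"
  then show "E (\<lambda>a b. f (\<phi> a b)) = E (\<lambda>a b. g (\<phi> a b))" using \<phi> by (intro cong) simp
next
  fix f :: "'c \<Rightarrow> real"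
  have "Min (f ` D) \<le> Min {f (\<phi> a b) | a b. a \<in> A \<and> b \<in> B}"
    using assms pairs_nonempty by (intro Min_antimono) auto
  then show "Min (f ` D) \<le> E (\<lambda>a b. f (\<phi> a b))"
    using Min_le[of "\<lambda>a b. f (\<phi> a b)"] by linarith
next
  fix f :: "'c \<Rightarrow> real" and l :: real
  assume "0 \<le> l"
  then show "E (\<lambda>a b. l * f (\<phi> a b)) = l * E (\<lambda>a b. f (\<phi> a b))" by (rule scale)
next
  fix f g :: "'c \<Rightarrow> real"
  show "E (\<lambda>a b. f (\<phi> a b)) + E (\<lambda>a b. g (\<phi> a b)) \<le> E (\<lambda>a b. f (\<phi> a b) + g (\<phi> a b))"
    by (rule superadd)
qed

end

lemma all_less_Suc_nth: "(\<forall>i<Suc m. P i) \<longleftrightarrow> P 0 \<and> (\<forall>i<m. P (Suc i))"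
  using less_Suc_eq_0_disj by auto

lemma seqs_Cons: "j \<le> n \<Longrightarrow> x # xs \<in> seqs A j n \<longleftrightarrow> x \<in> A j \<and> xs \<in> seqs A (Suc j) n"
  unfolding seqs_def mem_Collect_eq length_Cons by (simp only: all_less_Suc_nth) auto

lemma seqs_beyond: "Suc n \<le> j \<Longrightarrow> seqs A j n = {[]}"
  unfolding seqs_def by auto

lemma length_seqs: "xs \<in> seqs A j n \<Longrightarrow> length xs = Suc n - j"
  unfolding seqs_def by auto

lemma seqs_nth: "xs \<in> seqs A j n \<Longrightarrow> i < length xs \<Longrightarrow> xs ! i \<in> A (j + i)"
  unfolding seqs_def by auto

lemma Cons_in_seqs_le: "x # xs \<in> seqs A j n \<Longrightarrow> j \<le> n"
  using length_seqs[of "x # xs" A j n] by simp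

lemma seqs_ConsE:
  assumes "xs \<in> seqs A j n" "j \<le> n"
  obtains x xs' where "xs = x # xs'" "x \<in> A j" "xs' \<in> seqs A (Suc j) n"
  using assms length_seqs[OF assms(1)] by (cases xs) (auto simp: seqs_Cons)

lemma seqs_nonempty: "(\<And>i. j \<le> i \<Longrightarrow> i \<le> n \<Longrightarrow> A i \<noteq> {}) \<Longrightarrow> seqs A j n \<noteq> {}"
proof (induction "Suc n - j" arbitrary: j)
  case 0
  then show ?case using seqs_beyond[of n j A] by auto
next
  case (Suc d)
  then have j: "j \<le> n" by auto
  obtain xs where "xs \<in> seqs A (Suc j) n" using Suc by fastforce
  moreover obtain x where "x \<in> A j" using Suc j by blast
  ultimately show ?case using seqs_Cons[OF j, of x xs A] by blast
qed

lemma finite_seqs: "(\<And>i. j \<le> i \<Longrightarrow> i \<le> n \<Longrightarrow> finite (A i)) \<Longrightarrow> finite (seqs A j n)"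
proof -
  assume fin: "\<And>i. j \<le> i \<Longrightarrow> i \<le> n \<Longrightarrow> finite (A i)"
  have "seqs A j n \<subseteq> {xs. set xs \<subseteq> (\<Union>i\<in>{j..n}. A i) \<and> length xs = Suc n - j}"
  proof safe
    fix xs x assume xs: "xs \<in> seqs A j n" and "x \<in> set xs"
    then obtain i where "i < length xs" "xs ! i = x" by (auto simp: in_set_conv_nth)
    then show "x \<in> (\<Union>i\<in>{j..n}. A i)" using seqs_nth[OF xs] length_seqs[OF xs] by force
  qed (rule length_seqs)
  moreover have "finite {xs. set xs \<subseteq> (\<Union>i\<in>{j..n}. A i) \<and> length xs = Suc n - j}"
    using fin by (intro finite_lists_length_eq) auto
  ultimately show ?thesis by (rule finite_subset)
qed

lemma append_in_seqs:
  "j + length u \<le> Suc n \<Longrightarrow>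
     u @ c \<in> seqs A j n \<longleftrightarrow> (\<forall>i<length u. u ! i \<in> A (j + i)) \<and> c \<in> seqs A (j + length u) n"
proof (induction u arbitrary: j)
  case (Cons v u)
  then have j: "j \<le> n" by simp
  have "(v # u) @ c \<in> seqs A j n \<longleftrightarrow>
      v \<in> A j \<and> (\<forall>i<length u. u ! i \<in> A (Suc j + i)) \<and> c \<in> seqs A (Suc j + length u) n"
    using Cons by (simp add: seqs_Cons[OF j])
  then show ?case by (simp only: length_Cons all_less_Suc_nth) simp
qed simp

lemma seqs_head_image:
  assumes "j \<le> n" and "x \<in> A j"
  shows "{F zs | zs. zs \<in> seqs A j n \<and> zs ! 0 = x} = (\<lambda>c. F (x # c)) ` seqs A (Suc j) n"
proof (intro equalityI subsetI)
  fix a assume "a \<in> {F zs | zs. zs \<in> seqs A j n \<and> zs ! 0 = x}"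
  then obtain zs where a: "a = F zs" and zs: "zs \<in> seqs A j n" "zs ! 0 = x" by blast
  obtain v c where "zs = v # c" "c \<in> seqs A (Suc j) n" using seqs_ConsE[OF zs(1) assms(1)] by blast
  then show "a \<in> (\<lambda>c. F (x # c)) ` seqs A (Suc j) n" using a zs(2) by simp
next
  fix a assume "a \<in> (\<lambda>c. F (x # c)) ` seqs A (Suc j) n"
  then obtain c where c: "c \<in> seqs A (Suc j) n" and a: "a = F (x # c)" by blast
  have "x # c \<in> seqs A j n" using c assms by (simp add: seqs_Cons)
  then show "a \<in> {F zs | zs. zs \<in> seqs A j n \<and> zs ! 0 = x}"
    unfolding mem_Collect_eq a by (intro exI[of _ "x # c"]) simp
qed

lemma ex_argmax:
  assumes "finite A" "A \<noteq> {}"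
  shows "\<exists>x\<in>A. \<forall>y\<in>A. (f y :: real) \<le> f x"
proof -
  have "Max (f ` A) \<in> f ` A" using assms by (intro Max_in) auto
  then obtain x where x: "x \<in> A" "f x = Max (f ` A)" by (auto simp del: Max_in)
  have "\<forall>y\<in>A. f y \<le> f x" unfolding x(2) using assms(1) by (auto intro: Max_ge)
  then show ?thesis using x(1) by blast
qed

lemma alpha_Cons:
  assumes "j < n"
  shows "alpha Q S obs n j (v # w) =
    upper (S j v) (ind (obs j)) * (upper (Q (Suc j) v) (ind (w ! 0)) * alpha Q S obs n (Suc j) w)"
proof -
  define F where "F i = upper (S i ((v # w) ! (i - j))) (ind (obs i)) *
                     upper (Q i ((v # w) ! (i - j - 1))) (ind ((v # w) ! (i - j)))" for i
  define F' where "F' i = upper (S i (w ! (i - Suc j))) (ind (obs i)) *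
                     upper (Q i (w ! (i - Suc j - 1))) (ind (w ! (i - Suc j)))" for i
  have "(\<Prod>i\<in>{Suc j..n}. F i) = F (Suc j) * (\<Prod>i\<in>{Suc (Suc j)..n}. F i)"
    using assms by (intro prod.atLeast_Suc_atMost) simp
  moreover have "(\<Prod>i\<in>{Suc (Suc j)..n}. F i) = (\<Prod>i\<in>{Suc (Suc j)..n}. F' i)"
  proof (rule prod.cong)
    fix i assume "i \<in> {Suc (Suc j)..n}"
    then have "i - j = Suc (i - Suc j)" and "i - Suc j = Suc (i - Suc (Suc j))" by auto
    then show "F i = F' i" unfolding F_def F'_def by simp
  qed simp
  moreover have "F (Suc j) = upper (S (Suc j) (w ! 0)) (ind (obs (Suc j))) * upper (Q (Suc j) v) (ind (w ! 0))"
    unfolding F_def by simp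
  ultimately show ?thesis unfolding alpha_def F_def[symmetric] F'_def[symmetric]
    by (simp add: mult_ac)
qed

lemma alpha_last: "alpha Q S obs n n [v] = upper (S n v) (ind (obs n))"
  unfolding alpha_def by simp

lemma Mog_I1:
  "z \<in> Pos Q S X obs k zp \<Longrightarrow> y \<in> opt Q S X Os obs n (Suc k) z \<Longrightarrow> z # y \<in> Mog Q S X Os obs n k zp"
  unfolding Mog_def Suc_eq_plus1 by blast

lemma Mog_I2:
  "z \<in> X k \<Longrightarrow> z \<notin> Pos Q S X obs k zp \<Longrightarrow> y \<in> seqs X (Suc k) n \<Longrightarrow> z # y \<in> Mog Q S X Os obs n k zp"
  unfolding Mog_def Suc_eq_plus1 by blast

lemma Mog_D:
  "z # y \<in> Mog Q S X Os obs n k zp \<Longrightarrow> z \<in> Pos Q S X obs k zp \<Longrightarrow> y \<in> opt Q S X Os obs n (Suc k) z"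
  unfolding Mog_def Suc_eq_plus1 by blast

lemma kept_invariant:
  "kept Q S X Os obs n k zp p \<Longrightarrow>
     p \<noteq> [] \<and> (\<forall>i<length p. p ! i \<in> X (k + i)) \<and>
     alpha_opt Q S X obs n k zp p \<le> alpha_max Q S X obs n (k + length p - 1) (last p) \<and>
     (2 \<le> length p \<longrightarrow> (\<exists>r. p @ r \<in> Mog Q S X Os obs n k zp))"
proof (induction rule: kept.induct)
  case (extend p x)
  have "\<forall>i<length (p @ [x]). (p @ [x]) ! i \<in> X (k + i)"
    using extend by (auto simp: nth_append less_Suc_eq)
  then show ?case using extend by auto
qed simp

lemma alpha_opt_single: "alpha_opt Q S X obs n k zp [x] = alpha_opt1 Q S X obs n k zp x"
  unfolding alpha_opt_def by simp

lemma alpha_opt_snoc: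
  assumes p: "p \<noteq> []"
  shows "alpha_opt Q S X obs n k zp (p @ [x]) = alpha_opt Q S X obs n k zp p /
    (upper (S (k + length p - 1) (last p)) (ind (obs (k + length p - 1))) * upper (Q (k + length p) (last p)) (ind x))"
proof -
  define L where "L = length p"
  have L: "1 \<le> L" using p unfolding L_def by (cases p) auto
  define F where "F zs i = upper (S (i - 1) (zs ! (i - 1 - k))) (ind (obs (i - 1))) *
                                   upper (Q i (zs ! (i - 1 - k))) (ind (zs ! (i - k)))" for zs :: "'a list" and i
  have e: "k + length (p @ [x]) - 1 = Suc (k + L - 1)" using L unfolding L_def by simp
  have ins: "{k + 1..Suc (k + L - 1)} = insert (Suc (k + L - 1)) {k + 1..k + L - 1}"
    using L by (intro atLeastAtMostSuc_conv) simp
  have "(\<Prod>i\<in>{k + 1..k + length (p @ [x]) - 1}. F (p @ [x]) i) =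
     F (p @ [x]) (Suc (k + L - 1)) * (\<Prod>i\<in>{k + 1..k + L - 1}. F (p @ [x]) i)"
    unfolding e ins by (intro prod.insert) auto
  also have "(\<Prod>i\<in>{k + 1..k + L - 1}. F (p @ [x]) i) = (\<Prod>i\<in>{k + 1..k + L - 1}. F p i)"
  proof (rule prod.cong)
    fix i assume "i \<in> {k + 1..k + L - 1}"
    hence "i - 1 - k < L" "i - k < L" by auto
    thus "F (p @ [x]) i = F p i" unfolding F_def L_def by (simp add: nth_append)
  qed simp
  also have "F (p @ [x]) (Suc (k + L - 1)) =
     upper (S (k + length p - 1) (last p)) (ind (obs (k + length p - 1))) * upper (Q (k + length p) (last p)) (ind x)"
  proof -
    have 1: "Suc (k + L - 1) - 1 - k = L - 1" "Suc (k + L - 1) - k = L" "Suc (k + L - 1) - 1 = k + L - 1"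
      "Suc (k + L - 1) = k + L" using L by auto
    have 2: "(p @ [x]) ! (L - 1) = last p" using L p unfolding L_def by (simp add: nth_append last_conv_nth)
    have 3: "(p @ [x]) ! L = x" unfolding L_def by simp
    have 4: "(p @ [x]) ! (length p - Suc 0) = last p" using 2 unfolding L_def by simp
    show ?thesis unfolding F_def 1 2 3 by (simp add: L_def 4)
  qed
  finally have P: "(\<Prod>i\<in>{k + 1..k + length (p @ [x]) - 1}. F (p @ [x]) i) =
     (upper (S (k + length p - 1) (last p)) (ind (obs (k + length p - 1))) * upper (Q (k + length p) (last p)) (ind x))
      * (\<Prod>i\<in>{k + 1..k + length p - 1}. F p i)" unfolding L_def .
  have h: "(p @ [x]) ! 0 = p ! 0" using p by (cases p) auto
  show ?thesis unfolding alpha_opt_def F_def[symmetric] P h by (simp add: field_simps)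
qed

section \<open>Imprecise hidden Markov models\<close>

locale imprecise_hmm =
  fixes Q :: "nat \<Rightarrow> 'x \<Rightarrow> ('x \<Rightarrow> real) \<Rightarrow> real"
    and S :: "nat \<Rightarrow> 'x \<Rightarrow> ('o \<Rightarrow> real) \<Rightarrow> real"
    and X :: "nat \<Rightarrow> 'x set" and Os :: "nat \<Rightarrow> 'o set"
    and obs :: "nat \<Rightarrow> 'o" and n :: nat
  assumes n: "n \<ge> 1"
    and finX: "\<And>i. 1 \<le> i \<Longrightarrow> i \<le> n \<Longrightarrow> finite (X i) \<and> X i \<noteq> {}"
    and finO: "\<And>i. 1 \<le> i \<Longrightarrow> i \<le> n \<Longrightarrow> finite (Os i) \<and> Os i \<noteq> {}"
    and obs: "\<And>i. 1 \<le> i \<Longrightarrow> i \<le> n \<Longrightarrow> obs i \<in> Os i"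
    and cohQ: "\<And>i z. 1 \<le> i \<Longrightarrow> i \<le> n \<Longrightarrow> z \<in> X (i - 1) \<Longrightarrow> coherent_lp (X i) (Q i z)"
    and cohS: "\<And>i z. 1 \<le> i \<Longrightarrow> i \<le> n \<Longrightarrow> z \<in> X i \<Longrightarrow> coherent_lp (Os i) (S i z)"
    and posQ: "\<And>i z y. 1 \<le> i \<Longrightarrow> i \<le> n \<Longrightarrow> z \<in> X (i - 1) \<Longrightarrow> y \<in> X i
                 \<Longrightarrow> upper (Q i z) (ind y) > 0"
    and posS: "\<And>i z ob. 1 \<le> i \<Longrightarrow> i \<le> n \<Longrightarrow> z \<in> X i \<Longrightarrow> ob \<in> Os i
                 \<Longrightarrow> upper (S i z) (ind ob) > 0"
begin

lemma coherent_Q: "1 \<le> i \<Longrightarrow> i \<le> n \<Longrightarrow> z \<in> X (i - 1) \<Longrightarrow> coherent_prevision (X i) (Q i z)"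
  using cohQ finX by (intro coherent_prevision.intro) auto

lemma coherent_S: "1 \<le> i \<Longrightarrow> i \<le> n \<Longrightarrow> z \<in> X i \<Longrightarrow> coherent_prevision (Os i) (S i z)"
  using cohS finO by (intro coherent_prevision.intro) auto

lemma upper_S_obs_pos: "1 \<le> j \<Longrightarrow> j \<le> n \<Longrightarrow> u \<in> X j \<Longrightarrow> 0 < upper (S j u) (ind (obs j))"
  using posS[of j u "obs j"] obs[of j] by simp

lemma finite_seqs_X: "1 \<le> j \<Longrightarrow> finite (seqs X j n)"
  using finX by (intro finite_seqs) auto

lemma seqs_X_nonempty: "1 \<le> j \<Longrightarrow> seqs X j n \<noteq> {}"
  using finX by (intro seqs_nonempty) auto

definition joint_dom :: "nat \<Rightarrow> ('x list \<times> 'o list) set" where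
  "joint_dom j = seqs X j n \<times> seqs Os j n"

lemma finite_joint_dom: "1 \<le> j \<Longrightarrow> finite (joint_dom j)"
  unfolding joint_dom_def using finX finO by (intro finite_cartesian_product finite_seqs) auto

lemma joint_dom_nonempty: "1 \<le> j \<Longrightarrow> joint_dom j \<noteq> {}"
  unfolding joint_dom_def using finX finO seqs_nonempty[of j n X] seqs_nonempty[of j n Os] by auto

lemma Cons_in_joint_dom:
  "j \<le> n \<Longrightarrow> (x # xs, ob # os) \<in> joint_dom j \<longleftrightarrow> x \<in> X j \<and> ob \<in> Os j \<and> (xs, os) \<in> joint_dom (Suc j)"
  unfolding joint_dom_def by (auto simp: seqs_Cons)

lemma jointP_last: "jointP Q S X Os n 0 z = (\<lambda>f. Q n z (\<lambda>u. S n u (\<lambda>ob. f ([u], [ob]))))"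
  by (rule ext) simp

lemma jointP_unfold:
  assumes "j < n"
  shows "jointP Q S X Os n (n - j) z = (\<lambda>f. Q j z (\<lambda>u. ind_nat_ext (Os j) (joint_dom (Suc j)) (S j u)
            (jointP Q S X Os n (n - Suc j) u) (\<lambda>ob b. f (u # fst b, ob # snd b))))"
proof -
  have "n - j = Suc (n - Suc j)" "n - Suc (n - Suc j) = j" "n - (n - Suc j) = Suc j" using assms by auto
  then show ?thesis by (intro ext) (simp only: jointP.simps joint_dom_def)
qed

lemma coherent_jointP:
  "1 \<le> j \<Longrightarrow> j \<le> n \<Longrightarrow> z \<in> X (j - 1) \<Longrightarrow> coherent_prevision (joint_dom j) (jointP Q S X Os n (n - j) z)"
proof (induction "n - j" arbitrary: j z)
  case 0
  then have j: "j = n" by simp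
  have "coherent_lp (joint_dom n) (\<lambda>f. S n u (\<lambda>ob. f ([u], [ob])))" if u: "u \<in> X n" for u
    using n u finite_joint_dom[of n]
    by (intro coherent_prevision.coherent_lp_comp[OF coherent_S, where \<phi> = "\<lambda>ob. ([u], [ob])"])
      (auto simp: joint_dom_def seqs_beyond seqs_Cons)
  then have "coherent_lp (joint_dom n) (jointP Q S X Os n 0 z)"
    unfolding jointP_last using 0 j n finite_joint_dom[of n]
    by (intro coherent_prevision.coherent_lp_compose[OF coherent_Q]) auto
  then have "coherent_prevision (joint_dom n) (jointP Q S X Os n 0 z)"
    by (rule coherent_prevision.intro) (use n finite_joint_dom joint_dom_nonempty in auto)
  then show ?case using j by (simp add: jointP_last)
next
  case (Suc d)
  then have j: "1 \<le> j" "j < n" by auto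
  have "coherent_lp (joint_dom j) (\<lambda>f. ind_nat_ext (Os j) (joint_dom (Suc j)) (S j u)
          (jointP Q S X Os n (n - Suc j) u) (\<lambda>ob b. f (u # fst b, ob # snd b)))"
    if u: "u \<in> X j" for u
  proof -
    have "indep_natural_extension (Os j) (S j u) (joint_dom (Suc j)) (jointP Q S X Os n (n - Suc j) u)"
      unfolding indep_natural_extension_def using coherent_S[of j u] Suc j u by simp
    then show ?thesis
      using j u finite_joint_dom
      by (intro indep_natural_extension.coherent_lp_comp[where \<phi> = "\<lambda>ob b. (u # fst b, ob # snd b)"])
        (auto simp: Cons_in_joint_dom)
  qed
  then have "coherent_lp (joint_dom j) (jointP Q S X Os n (n - j) z)"
    unfolding jointP_unfold[OF j(2)] using j Suc.prems finite_joint_dom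
    by (intro coherent_prevision.coherent_lp_compose[OF coherent_Q]) auto
  then show ?case using j finite_joint_dom joint_dom_nonempty by (auto intro: coherent_prevision.intro)
qed

definition obs_gamble :: "nat \<Rightarrow> ('x list \<Rightarrow> real) \<Rightarrow> 'x list \<times> 'o list \<Rightarrow> real" where
  "obs_gamble j c = (\<lambda>(xs, os). (if os = map obs [j..<Suc n] then 1 else 0) * c xs)"

(* lower_obs j z c is P_j(I_{o_{j:n}} * c | z); the value c [] for j = n + 1 makes lower_obs_Cons
   hold uniformly. *)
definition lower_obs :: "nat \<Rightarrow> 'x \<Rightarrow> ('x list \<Rightarrow> real) \<Rightarrow> real" where
  "lower_obs j z c = (if j \<le> n then jointP Q S X Os n (n - j) z (obs_gamble j c) else c [])"

definition emit :: "nat \<Rightarrow> 'x \<Rightarrow> real \<Rightarrow> real" where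
  "emit j u t = S j u (\<lambda>ob. ind (obs j) ob * t)"

lemma obs_gamble_Cons:
  "j \<le> n \<Longrightarrow> obs_gamble j c (u # xs, ob # os) = ind (obs j) ob * obs_gamble (Suc j) (\<lambda>xs. c (u # xs)) (xs, os)"
  unfolding obs_gamble_def ind_def by (simp add: upt_conv_Cons del: upt_Suc)

lemma lower_obs_Cons:
  assumes j: "1 \<le> j" "j \<le> n" and z: "z \<in> X (j - 1)"
  shows "lower_obs j z c = Q j z (\<lambda>u. emit j u (lower_obs (Suc j) u (\<lambda>xs. c (u # xs))))"
proof (cases "j = n")
  case True
  then show ?thesis
    unfolding lower_obs_def emit_def by (simp add: obs_gamble_def ind_def mult.commute)
next
  case False
  then have jn: "j < n" using j by simp
  have "lower_obs j z c = Q j z (\<lambda>u. ind_nat_ext (Os j) (joint_dom (Suc j)) (S j u)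
      (jointP Q S X Os n (n - Suc j) u) (\<lambda>ob b. ind (obs j) ob * obs_gamble (Suc j) (\<lambda>xs. c (u # xs)) b))"
    unfolding lower_obs_def using j jointP_unfold[OF jn] by (simp add: obs_gamble_Cons split_def)
  also have "\<dots> = Q j z (\<lambda>u. emit j u (lower_obs (Suc j) u (\<lambda>xs. c (u # xs))))"
  proof (rule coherent_prevision.cong[OF coherent_Q[OF j z]])
    fix u assume u: "u \<in> X j"
    have "indep_natural_extension (Os j) (S j u) (joint_dom (Suc j)) (jointP Q S X Os n (n - Suc j) u)"
      unfolding indep_natural_extension_def using coherent_S[of j u] coherent_jointP[of "Suc j" u] j jn u
      by simp
    then show "ind_nat_ext (Os j) (joint_dom (Suc j)) (S j u) (jointP Q S X Os n (n - Suc j) u)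
        (\<lambda>ob b. ind (obs j) ob * obs_gamble (Suc j) (\<lambda>xs. c (u # xs)) b) =
      emit j u (lower_obs (Suc j) u (\<lambda>xs. c (u # xs)))"
      using jn by (simp add: indep_natural_extension.product ind_def emit_def lower_obs_def)
  qed
  finally show ?thesis .
qed

lemma lower_obs_zero:
  assumes "1 \<le> j" "z \<in> X (j - 1)"
  shows "lower_obs j z (\<lambda>_. 0) = 0"
proof (cases "j \<le> n")
  case True
  have "obs_gamble j (\<lambda>_. 0) = (\<lambda>_. 0)" by (auto simp: obs_gamble_def)
  then show ?thesis
    using coherent_prevision.zero[OF coherent_jointP[OF assms(1) True assms(2)]] True
    by (simp add: lower_obs_def)
qed (simp add: lower_obs_def)

lemma lower_obs_le_upper:
  assumes "1 \<le> j" "z \<in> X (j - 1)"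
  shows "lower_obs j z c \<le> - lower_obs j z (\<lambda>xs. - c xs)"
proof (cases "j \<le> n")
  case True
  note C = coherent_jointP[OF assms(1) True assms(2)]
  have "(\<lambda>x. obs_gamble j c x + obs_gamble j (\<lambda>xs. - c xs) x) = (\<lambda>_. 0)"
    unfolding obs_gamble_def by (auto simp: fun_eq_iff)
  then have "lower_obs j z c + lower_obs j z (\<lambda>xs. - c xs) \<le> 0"
    using coherent_prevision.superadd[OF C, of "obs_gamble j c" "obs_gamble j (\<lambda>xs. - c xs)"]
      coherent_prevision.zero[OF C] True
    unfolding lower_obs_def by simp
  then show ?thesis by simp
qed (simp add: lower_obs_def)

lemma emit_mono: "1 \<le> j \<Longrightarrow> j \<le> n \<Longrightarrow> u \<in> X j \<Longrightarrow> t1 \<le> t2 \<Longrightarrow> emit j u t1 \<le> emit j u t2"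
  unfolding emit_def by (intro coherent_prevision.mono[OF coherent_S] mult_left_mono) (auto simp: ind_def)

lemma emit_zero: "1 \<le> j \<Longrightarrow> j \<le> n \<Longrightarrow> u \<in> X j \<Longrightarrow> emit j u 0 = 0"
  unfolding emit_def using coherent_prevision.zero[OF coherent_S] by simp

lemma emit_nonneg: "1 \<le> j \<Longrightarrow> j \<le> n \<Longrightarrow> u \<in> X j \<Longrightarrow> 0 \<le> t \<Longrightarrow> emit j u t = t * S j u (ind (obs j))"
  unfolding emit_def using coherent_prevision.scale[OF coherent_S, of j u t "ind (obs j)"]
  by (simp add: mult.commute)

lemma emit_nonpos:
  "1 \<le> j \<Longrightarrow> j \<le> n \<Longrightarrow> u \<in> X j \<Longrightarrow> t \<le> 0 \<Longrightarrow> emit j u t = t * upper (S j u) (ind (obs j))"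
  unfolding emit_def using coherent_prevision.scale_nonpos[OF coherent_S, of j u t "ind (obs j)"]
  by (simp add: mult.commute)

lemma emit_max:
  assumes "1 \<le> j" "j \<le> n" "u \<in> X j"
  shows "emit j u (max t 0) = max (emit j u t) 0"
proof (cases "0 \<le> t")
  case True
  then have "0 \<le> emit j u t"
    using emit_nonneg[OF assms True] coherent_prevision.ind_nonneg[OF coherent_S[OF assms]] by simp
  then show ?thesis using True by simp
next
  case False
  then show ?thesis using emit_mono[OF assms, of t 0] emit_zero[OF assms] by simp
qed

(* By lower_obs_neg_ind this is the upper probability of the state path w jointly with o_{j:n}. *)
definition path_weight :: "nat \<Rightarrow> 'x \<Rightarrow> 'x list \<Rightarrow> real" where
  "path_weight j z w = (if j \<le> n then upper (Q j z) (ind (w ! 0)) * alpha Q S obs n j w else 1)"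

lemma path_weight_Cons:
  assumes "j \<le> n" and "w \<in> seqs X (Suc j) n"
  shows "path_weight j z (v # w) = upper (Q j z) (ind v) * (upper (S j v) (ind (obs j)) * path_weight (Suc j) v w)"
proof (cases "j = n")
  case True
  then have "w = []" using assms(2) seqs_beyond[of n "Suc j" X] by simp
  then show ?thesis unfolding path_weight_def using True by (simp add: alpha_last)
qed (use assms in \<open>simp add: path_weight_def alpha_Cons\<close>)

lemma alpha_Cons_path_weight:
  "j < n \<Longrightarrow> alpha Q S obs n j (x # c) = upper (S j x) (ind (obs j)) * path_weight (Suc j) x c"
  unfolding path_weight_def using alpha_Cons[of j n] by simp

lemma path_weight_pos: "1 \<le> j \<Longrightarrow> z \<in> X (j - 1) \<Longrightarrow> w \<in> seqs X j n \<Longrightarrow> 0 < path_weight j z w"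
proof (induction "Suc n - j" arbitrary: j z w)
  case 0
  then show ?case unfolding path_weight_def by simp
next
  case (Suc d)
  then have jn: "j \<le> n" by simp
  obtain v w' where "w = v # w'" "v \<in> X j" "w' \<in> seqs X (Suc j) n"
    using seqs_ConsE[OF Suc.prems(3) jn] .
  then show ?case
    using Suc.hyps(1)[of "Suc j" v w'] Suc.hyps(2) Suc.prems jn posQ upper_S_obs_pos
    by (simp add: path_weight_Cons)
qed

lemma path_weight_append_mono:
  assumes "1 \<le> j" "z \<in> X (j - 1)" "u @ c1 \<in> seqs X j n" "u @ c2 \<in> seqs X j n"
    and "path_weight (j + length u) (last (z # u)) c1 \<le> path_weight (j + length u) (last (z # u)) c2"
  shows "path_weight j z (u @ c1) \<le> path_weight j z (u @ c2)"
  using assms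
proof (induction u arbitrary: j z)
  case (Cons v u)
  then have jn: "j \<le> n" using Cons_in_seqs_le by auto
  have v: "v \<in> X j" and uc: "u @ c1 \<in> seqs X (Suc j) n" "u @ c2 \<in> seqs X (Suc j) n"
    using Cons.prems(3,4) by (auto simp: seqs_Cons[OF jn])
  then have "path_weight (Suc j) v (u @ c1) \<le> path_weight (Suc j) v (u @ c2)"
    using Cons.IH[of "Suc j" v] Cons.prems(5) by simp
  moreover have "0 \<le> upper (Q j z) (ind v) * upper (S j v) (ind (obs j))"
    using posQ[of j z v] upper_S_obs_pos[of j v] Cons.prems(1,2) jn v by simp
  ultimately show ?case
    unfolding append_Cons path_weight_Cons[OF jn uc(1)] path_weight_Cons[OF jn uc(2)] mult.assoc[symmetric]
    by (rule mult_left_mono)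
qed simp

subsection \<open>Optimality of maximal path weights\<close>

definition ind_diff :: "'x list \<Rightarrow> 'x list \<Rightarrow> 'x list \<Rightarrow> real" where
  "ind_diff y w = (\<lambda>xs. (if xs = y then 1 else 0) - (if xs = w then 1 else 0))"

lemma opt_iff:
  "1 \<le> j \<Longrightarrow> j \<le> n \<Longrightarrow>
     w \<in> opt Q S X Os obs n j z \<longleftrightarrow> w \<in> seqs X j n \<and> (\<forall>y\<in>seqs X j n. lower_obs j z (ind_diff y w) \<le> 0)"
  unfolding opt_def lowerP_def lower_obs_def obs_gamble_def ind_diff_def by simp

lemma lower_obs_neg_ind:
  "1 \<le> j \<Longrightarrow> z \<in> X (j - 1) \<Longrightarrow> w \<in> seqs X j n \<Longrightarrow>
     lower_obs j z (\<lambda>xs. - (if xs = w then 1 else 0)) = - path_weight j z w"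
proof (induction "Suc n - j" arbitrary: j z w)
  case 0
  then show ?case using seqs_beyond[of n j X] unfolding lower_obs_def path_weight_def by simp
next
  case (Suc d)
  then have j: "1 \<le> j" "j \<le> n" by auto
  obtain v w' where w: "w = v # w'" and v: "v \<in> X j" and w': "w' \<in> seqs X (Suc j) n"
    using seqs_ConsE[OF Suc.prems(3) j(2)] .
  define K where "K = upper (S j v) (ind (obs j)) * path_weight (Suc j) v w'"
  have K: "0 < K" unfolding K_def using upper_S_obs_pos[OF j v] path_weight_pos[of "Suc j" v w'] v w' by simp
  have "lower_obs j z (\<lambda>xs. - (if xs = w then 1 else 0)) =
     Q j z (\<lambda>u. emit j u (lower_obs (Suc j) u (\<lambda>xs. - (if u # xs = v # w' then 1 else 0))))"
    unfolding w by (rule lower_obs_Cons[OF j Suc.prems(2)])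
  also have "\<dots> = Q j z (\<lambda>u. (- K) * ind v u)"
  proof (rule coherent_prevision.cong[OF coherent_Q[OF j Suc.prems(2)]])
    fix u assume u: "u \<in> X j"
    show "emit j u (lower_obs (Suc j) u (\<lambda>xs. - (if u # xs = v # w' then 1 else 0))) = (- K) * ind v u"
    proof (cases "u = v")
      case True
      have "lower_obs (Suc j) u (\<lambda>xs. - (if u # xs = v # w' then 1 else 0)) = - path_weight (Suc j) v w'"
        using Suc.hyps(1)[of "Suc j" v w'] Suc.hyps(2) v w' True by simp
      then show ?thesis
        using emit_nonpos[OF j u, of "- path_weight (Suc j) v w'"] path_weight_pos[of "Suc j" v w'] v w' True
        unfolding K_def ind_def by simp
    next
      case False
      then show ?thesis using lower_obs_zero[of "Suc j" u] emit_zero[OF j u] u by (simp add: ind_def)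
    qed
  qed
  also have "\<dots> = - path_weight j z w"
    using K coherent_prevision.scale_nonpos[OF coherent_Q[OF j Suc.prems(2)], of "- K" "ind v"]
    unfolding w path_weight_Cons[OF j(2) w'] K_def by simp
  finally show ?case .
qed

lemma lower_obs_ind_le:
  "1 \<le> j \<Longrightarrow> z \<in> X (j - 1) \<Longrightarrow> y \<in> seqs X j n \<Longrightarrow>
     lower_obs j z (\<lambda>xs. if xs = y then 1 else 0) \<le> path_weight j z y"
  using lower_obs_le_upper[of j z "\<lambda>xs. if xs = y then 1 else 0"] lower_obs_neg_ind[of j z y] by simp

lemma lower_obs_ind_diff_head:
  assumes j: "1 \<le> j" "j \<le> n" and z: "z \<in> X (j - 1)" and "y0 \<noteq> w0"
    and y: "y0 \<in> X j" "y' \<in> seqs X (Suc j) n" and w: "w0 \<in> X j" "w' \<in> seqs X (Suc j) n"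
  shows "lower_obs j z (ind_diff (y0 # y') (w0 # w')) \<le> path_weight j z (y0 # y') - path_weight j z (w0 # w')"
proof -
  define a where "a = upper (S j y0) (ind (obs j)) * path_weight (Suc j) y0 y'"
  define b where "b = upper (S j w0) (ind (obs j)) * path_weight (Suc j) w0 w'"
  have W: "0 \<le> path_weight (Suc j) y0 y'" "0 \<le> path_weight (Suc j) w0 w'"
    using path_weight_pos[of "Suc j"] y w by (simp_all add: less_imp_le)
  have ab: "0 \<le> a" "0 \<le> b"
    unfolding a_def b_def using upper_S_obs_pos[OF j y(1)] upper_S_obs_pos[OF j w(1)] W by simp_all
  have "emit j u (lower_obs (Suc j) u (\<lambda>xs. ind_diff (y0 # y') (w0 # w') (u # xs)))
      \<le> a * ind y0 u - b * ind w0 u" if u: "u \<in> X j" for u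
  proof -
    consider "u = y0" | "u = w0" | "u \<noteq> y0" "u \<noteq> w0" by blast
    then show ?thesis
    proof cases
      case 1
      have "(\<lambda>xs. ind_diff (y0 # y') (w0 # w') (y0 # xs)) = (\<lambda>xs. if xs = y' then 1 else 0)"
        using \<open>y0 \<noteq> w0\<close> by (auto simp: ind_diff_def)
      then have "lower_obs (Suc j) y0 (\<lambda>xs. ind_diff (y0 # y') (w0 # w') (y0 # xs)) \<le> path_weight (Suc j) y0 y'"
        using lower_obs_ind_le[of "Suc j" y0 y'] y by simp
      then have "emit j u (lower_obs (Suc j) u (\<lambda>xs. ind_diff (y0 # y') (w0 # w') (u # xs)))
          \<le> emit j y0 (path_weight (Suc j) y0 y')"
        using 1 emit_mono[OF j y(1)] by simp
      also have "\<dots> \<le> a"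
        using emit_nonneg[OF j y(1) W(1)] mult_left_mono[OF conjunct2[OF coherent_prevision.ind_bounds[OF coherent_S[OF j y(1)]]] W(1)]
        unfolding a_def by (simp add: mult.commute)
      finally show ?thesis using 1 \<open>y0 \<noteq> w0\<close> by (simp add: ind_def)
    next
      case 2
      then have "lower_obs (Suc j) u (\<lambda>xs. ind_diff (y0 # y') (w0 # w') (u # xs)) = - path_weight (Suc j) w0 w'"
        using \<open>y0 \<noteq> w0\<close> lower_obs_neg_ind[of "Suc j" w0 w'] w by (simp add: ind_diff_def)
      then show ?thesis using 2 \<open>y0 \<noteq> w0\<close> emit_nonpos[OF j w(1)] W(2) unfolding b_def by (simp add: ind_def)
    next
      case 3
      then show ?thesis using lower_obs_zero[of "Suc j" u] emit_zero[OF j u] u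
        by (simp add: ind_diff_def ind_def)
    qed
  qed
  then have "lower_obs j z (ind_diff (y0 # y') (w0 # w')) \<le> Q j z (\<lambda>u. a * ind y0 u - b * ind w0 u)"
    unfolding lower_obs_Cons[OF j z] by (rule coherent_prevision.mono[OF coherent_Q[OF j z]])
  also have "\<dots> \<le> a * upper (Q j z) (ind y0) - b * upper (Q j z) (ind w0)"
    using ab by (rule coherent_prevision.ind_diff_le[OF coherent_Q[OF j z]])
  finally show ?thesis unfolding path_weight_Cons[OF j(2) y(2)] path_weight_Cons[OF j(2) w(2)] a_def b_def
    by (simp add: mult_ac)
qed

(* If y and w differ in their first state, lower_obs_ind_diff_head bounds the value by a difference of
   weights; otherwise the recursion passes to the tails, which inherit maximality. *)
lemma argmax_lower_obs_ind_diff: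
  "1 \<le> j \<Longrightarrow> z \<in> X (j - 1) \<Longrightarrow> w \<in> seqs X j n \<Longrightarrow> y \<in> seqs X j n \<Longrightarrow>
     (\<forall>c\<in>seqs X j n. path_weight j z c \<le> path_weight j z w) \<Longrightarrow> lower_obs j z (ind_diff y w) \<le> 0"
proof (induction "Suc n - j" arbitrary: j z w y)
  case 0
  then show ?case using seqs_beyond[of n j X] unfolding lower_obs_def ind_diff_def by simp
next
  case (Suc d)
  then have j: "1 \<le> j" "j \<le> n" by auto
  obtain w0 w' where w: "w = w0 # w'" "w0 \<in> X j" "w' \<in> seqs X (Suc j) n"
    using seqs_ConsE[OF Suc.prems(3) j(2)] .
  obtain y0 y' where y: "y = y0 # y'" "y0 \<in> X j" "y' \<in> seqs X (Suc j) n"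
    using seqs_ConsE[OF Suc.prems(4) j(2)] .
  show ?case
  proof (cases "y0 = w0")
    case True
    have "path_weight (Suc j) w0 c \<le> path_weight (Suc j) w0 w'" if c: "c \<in> seqs X (Suc j) n" for c
    proof -
      have "path_weight j z (w0 # c) \<le> path_weight j z (w0 # w')"
        using Suc.prems(5) w c by (auto simp: seqs_Cons[OF j(2)])
      then show ?thesis
        unfolding path_weight_Cons[OF j(2) c] path_weight_Cons[OF j(2) w(3)] mult.assoc[symmetric]
        using posQ[OF j Suc.prems(2) w(2)] upper_S_obs_pos[OF j w(2)] by simp
    qed
    then have "lower_obs (Suc j) w0 (ind_diff y' w') \<le> 0"
      using Suc.hyps(1)[of "Suc j" w0 w' y'] Suc.hyps(2) w y by simp
    then have "emit j u (lower_obs (Suc j) u (\<lambda>xs. ind_diff y w (u # xs))) \<le> 0" if u: "u \<in> X j" for u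
      using True emit_mono[OF j u, of _ 0] emit_zero[OF j u] lower_obs_zero[of "Suc j" u] u
      unfolding w(1) y(1) by (cases "u = w0") (auto simp: ind_diff_def)
    then show ?thesis
      unfolding lower_obs_Cons[OF j Suc.prems(2)]
      using coherent_prevision.mono[OF coherent_Q[OF j Suc.prems(2)], of _ "\<lambda>_. 0"]
        coherent_prevision.zero[OF coherent_Q[OF j Suc.prems(2)]] by fastforce
  next
    case False
    then show ?thesis
      using lower_obs_ind_diff_head[OF j Suc.prems(2) False y(2,3) w(2,3)] Suc.prems(4,5) w(1) y(1)
      by fastforce
  qed
qed

lemma argmax_in_opt:
  assumes "1 \<le> j" "j < n" "z \<in> X j" "c \<in> seqs X (Suc j) n"
    and "\<forall>c'\<in>seqs X (Suc j) n. path_weight (Suc j) z c' \<le> path_weight (Suc j) z c"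
  shows "c \<in> opt Q S X Os obs n (Suc j) z"
  using argmax_lower_obs_ind_diff[of "Suc j" z c] opt_iff[of "Suc j" c z] assms by simp

lemma lower_obs_ind_diff_Cons_mono:
  assumes j: "1 \<le> j" "j \<le> n" and z: "z \<in> X (j - 1)" and "y0 \<noteq> v" and v: "v \<in> X j"
    and w: "w1 \<in> seqs X (Suc j) n" "w2 \<in> seqs X (Suc j) n"
    and le: "path_weight (Suc j) v w1 \<le> path_weight (Suc j) v w2"
  shows "lower_obs j z (ind_diff (y0 # y') (v # w2)) \<le> lower_obs j z (ind_diff (y0 # y') (v # w1))"
proof -
  have "emit j u (lower_obs (Suc j) u (\<lambda>xs. ind_diff (y0 # y') (v # w2) (u # xs)))
      \<le> emit j u (lower_obs (Suc j) u (\<lambda>xs. ind_diff (y0 # y') (v # w1) (u # xs)))" if u: "u \<in> X j" for u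
  proof (cases "u = v")
    case True
    have "lower_obs (Suc j) v (\<lambda>xs. ind_diff (y0 # y') (v # w) (v # xs)) = - path_weight (Suc j) v w"
      if "w \<in> seqs X (Suc j) n" for w
      using lower_obs_neg_ind[of "Suc j" v w] \<open>y0 \<noteq> v\<close> v that by (simp add: ind_diff_def)
    then show ?thesis using True w le emit_mono[OF j v] by simp
  qed (simp add: ind_diff_def)
  then show ?thesis
    unfolding lower_obs_Cons[OF j z] by (rule coherent_prevision.mono[OF coherent_Q[OF j z]])
qed

lemma lower_obs_ind_diff_append:
  "1 \<le> j \<Longrightarrow> z \<in> X (j - 1) \<Longrightarrow> u @ c1 \<in> seqs X j n \<Longrightarrow> u @ c2 \<in> seqs X j n \<Longrightarrow> y \<in> seqs X j n \<Longrightarrow>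
   (\<forall>c\<in>seqs X (j + length u) n.
      path_weight (j + length u) (last (z # u)) c \<le> path_weight (j + length u) (last (z # u)) c2) \<Longrightarrow>
   lower_obs j z (ind_diff y (u @ c2)) \<le> max (lower_obs j z (ind_diff y (u @ c1))) 0"
proof (induction u arbitrary: j z y)
  case Nil
  then show ?case using argmax_lower_obs_ind_diff[of j z c2 y] by simp
next
  case (Cons v u)
  then have j: "1 \<le> j" "j \<le> n" using Cons_in_seqs_le by auto
  note QQ = coherent_Q[OF j Cons.prems(2)]
  have v: "v \<in> X j" and uc: "u @ c1 \<in> seqs X (Suc j) n" "u @ c2 \<in> seqs X (Suc j) n"
    using Cons.prems(3,4) by (auto simp: seqs_Cons[OF j(2)])
  obtain y0 y' where y: "y = y0 # y'" "y0 \<in> X j" "y' \<in> seqs X (Suc j) n"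
    using seqs_ConsE[OF Cons.prems(5) j(2)] .
  define I where "I c u' = emit j u' (lower_obs (Suc j) u' (\<lambda>xs. ind_diff y (v # u @ c) (u' # xs)))" for c u'
  have rec: "lower_obs j z (ind_diff y (v # u @ c)) = Q j z (I c)" for c
    unfolding I_def by (rule lower_obs_Cons[OF j Cons.prems(2)])
  have I0: "I c u' = 0" if "u' \<in> X j" "u' \<noteq> v" "u' \<noteq> y0" for c u'
    using that lower_obs_zero[of "Suc j" u'] emit_zero[OF j that(1)] unfolding I_def y(1)
    by (simp add: ind_diff_def)
  show ?case
  proof (cases "y0 = v")
    case False
    have "Suc j + length u \<le> Suc n" using length_seqs[OF uc(1)] j by simp
    then have "c1 \<in> seqs X (Suc j + length u) n" using append_in_seqs uc(1) by blast
    then have "path_weight (Suc j) v (u @ c1) \<le> path_weight (Suc j) v (u @ c2)"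
      using path_weight_append_mono[of "Suc j" v u c1 c2] Cons.prems(6) v uc by simp
    then have "lower_obs j z (ind_diff y (v # u @ c2)) \<le> lower_obs j z (ind_diff y (v # u @ c1))"
      using lower_obs_ind_diff_Cons_mono[OF j Cons.prems(2) False v uc] unfolding y(1) by simp
    then show ?thesis by simp
  next
    case True
    have f: "(\<lambda>xs. ind_diff y (v # u @ c) (v # xs)) = ind_diff y' (u @ c)" for c
      unfolding y(1) ind_diff_def using True by auto
    have "lower_obs (Suc j) v (ind_diff y' (u @ c2)) \<le> max (lower_obs (Suc j) v (ind_diff y' (u @ c1))) 0"
      using Cons.IH[of "Suc j" v y'] v uc y Cons.prems(6) by simp
    then have "I c2 v \<le> max (I c1 v) 0"
      unfolding I_def f using emit_mono[OF j v] emit_max[OF j v] by metis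
    then have "I c2 u' \<le> max (I c1 u') 0" if "u' \<in> X j" for u'
      using I0[OF that] True by (cases "u' = v") auto
    then have "Q j z (I c2) \<le> Q j z (\<lambda>u'. max (I c1 u') 0)" by (rule coherent_prevision.mono[OF QQ])
    also have "\<dots> = max (Q j z (I c1)) 0"
      using I0 True by (intro coherent_prevision.max_0_single_support[OF QQ]) auto
    finally show ?thesis using rec by simp
  qed
qed

lemma alpha_le_alpha_max:
  assumes "1 \<le> j" "j \<le> n" "x \<in> X j" "c \<in> seqs X (Suc j) n"
  shows "alpha Q S obs n j (x # c) \<le> alpha_max Q S X obs n j x"
  unfolding alpha_max_def seqs_head_image[of j n x X, OF assms(2,3)]
  using assms(1,4) finite_seqs_X[of "Suc j"] by (intro Max_ge) auto

lemma alpha_max_attained: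
  assumes "1 \<le> j" "j \<le> n" "x \<in> X j"
  obtains c where "c \<in> seqs X (Suc j) n" "alpha_max Q S X obs n j x = alpha Q S obs n j (x # c)"
proof -
  have "alpha_max Q S X obs n j x \<in> (\<lambda>c. alpha Q S obs n j (x # c)) ` seqs X (Suc j) n"
    unfolding alpha_max_def seqs_head_image[of j n x X, OF assms(2,3)] using assms finite_seqs_X seqs_X_nonempty
    by (intro Max_in) auto
  then show ?thesis using that by blast
qed

lemma beta_max_attained:
  assumes "1 \<le> j" "j \<le> n" "x \<in> X j"
  obtains c where "c \<in> seqs X (Suc j) n" "beta_max Q S X obs n j x = beta Q S obs n j (x # c)"
proof -
  have "beta_max Q S X obs n j x \<in> (\<lambda>c. beta Q S obs n j (x # c)) ` seqs X (Suc j) n"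
    unfolding beta_max_def seqs_head_image[of j n x X, OF assms(2,3)] using assms finite_seqs_X seqs_X_nonempty
    by (intro Max_in) auto
  then show ?thesis using that by blast
qed

lemma beta_le_alpha:
  assumes j: "1 \<le> j" "j \<le> n" and zs: "zs \<in> seqs X j n"
  shows "0 \<le> beta Q S obs n j zs \<and> beta Q S obs n j zs \<le> alpha Q S obs n j zs"
proof -
  have mult_bounds: "0 \<le> a * b \<and> a * b \<le> a' * b'"
    if "0 \<le> a \<and> a \<le> a'" "0 \<le> b \<and> b \<le> b'" for a a' b b' :: real
    using that by (simp add: mult_mono)
  define lo where "lo i = S i (zs ! (i - j)) (ind (obs i)) * Q i (zs ! (i - j - 1)) (ind (zs ! (i - j)))" for i
  define hi where "hi i = upper (S i (zs ! (i - j))) (ind (obs i)) *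
                          upper (Q i (zs ! (i - j - 1))) (ind (zs ! (i - j)))" for i
  have len: "length zs = Suc n - j" using length_seqs[OF zs] .
  have "0 \<le> lo i \<and> lo i \<le> hi i" if i: "i \<in> {j + 1..n}" for i
  proof -
    have "zs ! (i - j) \<in> X i" "zs ! (i - j - 1) \<in> X (i - 1)"
      using seqs_nth[OF zs, of "i - j"] seqs_nth[OF zs, of "i - j - 1"] len i by auto
    then show ?thesis unfolding lo_def hi_def
      using i j by (intro mult_bounds coherent_prevision.ind_bounds[OF coherent_S] coherent_prevision.ind_bounds[OF coherent_Q]) auto
  qed
  then have "0 \<le> prod lo {j + 1..n} \<and> prod lo {j + 1..n} \<le> prod hi {j + 1..n}"
    using prod_nonneg[of "{j + 1..n}" lo] prod_mono[of "{j + 1..n}" lo hi] by simp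
  moreover have "zs ! 0 \<in> X j" using seqs_nth[OF zs, of 0] len j by simp
  ultimately show ?thesis unfolding beta_def alpha_def lo_def[symmetric] hi_def[symmetric]
    using j by (intro mult_bounds coherent_prevision.ind_bounds[OF coherent_S]) auto
qed

lemma alpha_nonneg:
  "1 \<le> j \<Longrightarrow> j < n \<Longrightarrow> x \<in> X j \<Longrightarrow> c \<in> seqs X (Suc j) n \<Longrightarrow> 0 \<le> alpha Q S obs n j (x # c)"
  using alpha_Cons_path_weight[of j x c] upper_S_obs_pos[of j x] path_weight_pos[of "Suc j" x c] by simp

lemma tau_le:
  assumes "1 \<le> k" "k \<le> n" "zp \<in> X (k - 1)" "x \<in> X k" "xh \<in> X k"
  shows "tau Q k zp x xh \<le> upper (Q k zp) (ind x) / upper (Q k zp) (ind xh)"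
  unfolding tau_def using posQ[of k zp xh] assms
  by (intro coherent_prevision.Inf_ratio_le[OF coherent_Q[of k zp]]) auto

lemma Mog_Cons_exists:
  assumes "1 \<le> k" "k < n" "x \<in> X k"
  shows "\<exists>c. x # c \<in> Mog Q S X Os obs n k zp"
proof (cases "x \<in> Pos Q S X obs k zp")
  case True
  obtain cs where "cs \<in> seqs X (Suc k) n"
    and "\<forall>c\<in>seqs X (Suc k) n. path_weight (Suc k) x c \<le> path_weight (Suc k) x cs"
    using ex_argmax[OF finite_seqs_X seqs_X_nonempty, of "Suc k" "path_weight (Suc k) x"] by auto
  then have "cs \<in> opt Q S X Os obs n (Suc k) x" by (rule argmax_in_opt[OF assms])
  then show ?thesis using Mog_I1[OF True] by blast
next
  case False
  obtain c where "c \<in> seqs X (Suc k) n" using seqs_X_nonempty[of "Suc k"] by auto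
  then show ?thesis using Mog_I2[OF assms(3) False] by auto
qed

(* With xh maximising alpha_max x * upper Q_k({x} | zp), beta_max <= alpha_max and
   tau(x, xh) <= upper Q_k({x}) / upper Q_k({xh}) bound every term of alpha_opt1. *)
lemma alpha_opt1_le_alpha_max:
  assumes k: "1 \<le> k" "k < n" and zp: "zp \<in> X (k - 1)" and xh: "xh \<in> X k"
    and xmax: "\<forall>y\<in>X k. alpha_max Q S X obs n k y * upper (Q k zp) (ind y)
                        \<le> alpha_max Q S X obs n k xh * upper (Q k zp) (ind xh)"
  shows "alpha_opt1 Q S X obs n k zp xh \<le> alpha_max Q S X obs n k xh"
proof -
  have Qpos: "0 < upper (Q k zp) (ind xh)" using posQ k zp xh by simp
  have bound: "beta_max Q S X obs n k x * tau Q k zp x xh \<le> alpha_max Q S X obs n k xh"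
    if x: "x \<in> X k" for x
  proof -
    obtain cb where cb: "cb \<in> seqs X (Suc k) n" and bm: "beta_max Q S X obs n k x = beta Q S obs n k (x # cb)"
      using beta_max_attained[OF k(1) less_imp_le[OF k(2)] x] by blast
    have "x # cb \<in> seqs X k n" using k x cb by (simp add: seqs_Cons)
    then have b: "0 \<le> beta_max Q S X obs n k x" "beta_max Q S X obs n k x \<le> alpha_max Q S X obs n k x"
      using beta_le_alpha[of k "x # cb"] alpha_le_alpha_max[of k x cb] k x cb bm by auto
    have "beta_max Q S X obs n k x * tau Q k zp x xh
        \<le> beta_max Q S X obs n k x * (upper (Q k zp) (ind x) / upper (Q k zp) (ind xh))"
      using b tau_le[of k zp x xh] k zp x xh by (intro mult_left_mono) auto
    also have "\<dots> \<le> alpha_max Q S X obs n k x * (upper (Q k zp) (ind x) / upper (Q k zp) (ind xh))"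
      using b coherent_prevision.upper_ind_nonneg[OF coherent_Q[of k zp]] Qpos k zp
      by (intro mult_right_mono) auto
    also have "\<dots> \<le> alpha_max Q S X obs n k xh"
      using xmax x Qpos by (simp add: pos_divide_le_eq)
    finally show ?thesis .
  qed
  obtain c where "c \<in> seqs X (Suc k) n" using seqs_X_nonempty[of "Suc k"] by auto
  then have "0 \<le> alpha_max Q S X obs n k xh"
    using alpha_le_alpha_max[of k xh c] alpha_nonneg[of k xh c] k xh by simp
  moreover have "finite {beta_max Q S X obs n k x * tau Q k zp x xh | x. x \<in> X k \<and> x \<noteq> xh}"
    using finX[of k] k by (intro finite_image_set) auto
  ultimately show ?thesis unfolding alpha_opt1_def using bound by (intro Max.boundedI) auto
qed

lemma first_kept_exists:
  assumes k: "1 \<le> k" "k < n" and zp: "zp \<in> X (k - 1)"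
  shows "\<exists>x\<in>X k. (\<exists>r. [x] @ r \<in> Mog Q S X Os obs n k zp) \<and>
                  alpha_max Q S X obs n k x \<ge> alpha_opt Q S X obs n k zp [x]"
proof -
  have "finite (X k)" "X k \<noteq> {}" using finX[of k] k by auto
  then obtain xh where "xh \<in> X k" and "\<forall>y\<in>X k. alpha_max Q S X obs n k y * upper (Q k zp) (ind y)
      \<le> alpha_max Q S X obs n k xh * upper (Q k zp) (ind xh)"
    using ex_argmax[of "X k" "\<lambda>y. alpha_max Q S X obs n k y * upper (Q k zp) (ind y)"] by blast
  then show ?thesis
    using alpha_opt1_le_alpha_max[OF k zp] Mog_Cons_exists[OF k] by (auto simp: alpha_opt_single)
qed

lemma alpha_opt_snoc_argmax:
  assumes kept: "kept Q S X Os obs n k zp p" and k: "1 \<le> k" and s: "s = k + length p" "s \<le> n"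
    and cs: "x # r \<in> seqs X s n"
    and cmax: "\<forall>c\<in>seqs X s n. path_weight s (last p) c \<le> path_weight s (last p) (x # r)"
  shows "alpha_opt Q S X obs n k zp (p @ [x]) \<le> alpha_max Q S X obs n s x"
proof -
  note inv = kept_invariant[OF kept]
  obtain p0 p' where p: "p = p0 # p'" using inv by (cases p) auto
  then have s1: "1 \<le> s - 1" "s - 1 < n" "Suc (s - 1) = s" "k + length p - 1 = s - 1" using k s by auto
  have y: "last p \<in> X (s - 1)" using inv s p by (auto simp: last_conv_nth)
  have x: "x \<in> X s" and r: "r \<in> seqs X (Suc s) n" using cs s by (simp_all add: seqs_Cons)
  define Su where "Su = upper (S (s - 1) (last p)) (ind (obs (s - 1)))"
  define Qu where "Qu = upper (Q s (last p)) (ind x)"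
  have pos: "0 < Su" "0 < Qu"
    unfolding Su_def Qu_def using upper_S_obs_pos[of "s - 1"] posQ[of s] y x s1 s by auto
  obtain c0 where c0: "c0 \<in> seqs X s n"
    and am: "alpha_max Q S X obs n (s - 1) (last p) = alpha Q S obs n (s - 1) (last p # c0)"
    using alpha_max_attained[of "s - 1" "last p"] y s1 by auto
  have "alpha_max Q S X obs n (s - 1) (last p) = Su * path_weight s (last p) c0"
    unfolding am Su_def using alpha_Cons_path_weight[OF s1(2)] s1(3) by simp
  also have "\<dots> \<le> Su * path_weight s (last p) (x # r)"
    using cmax c0 pos by (simp add: mult_left_mono)
  also have "\<dots> = Su * Qu * alpha Q S obs n s (x # r)"
    unfolding Qu_def path_weight_def using s by simp
  also have "\<dots> \<le> Su * Qu * alpha_max Q S X obs n s x"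
    using alpha_le_alpha_max[of s x r] pos x r s1 s by (simp add: mult_left_mono)
  finally have "alpha_opt Q S X obs n k zp p \<le> Su * Qu * alpha_max Q S X obs n s x"
    using inv s1(4) by simp
  moreover have "alpha_opt Q S X obs n k zp (p @ [x]) = alpha_opt Q S X obs n k zp p / (Su * Qu)"
    unfolding alpha_opt_snoc[OF inv[THEN conjunct1]] Su_def Qu_def by (simp add: s(1))
  ultimately show ?thesis using pos by (simp add: pos_divide_le_eq mult_ac)
qed

lemma append_argmax_in_Mog:
  assumes kept: "kept Q S X Os obs n k zp p" and k: "1 \<le> k" "k < n"
    and s: "s = k + length p" "s \<le> n" and cs: "cs \<in> seqs X s n"
    and cmax: "\<forall>c\<in>seqs X s n. path_weight s (last p) c \<le> path_weight s (last p) cs"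
  shows "p @ cs \<in> Mog Q S X Os obs n k zp"
proof -
  obtain z p' where p: "p = z # p'" using kept_invariant[OF kept] by (cases p) auto
  have pel: "\<forall>i<length p. p ! i \<in> X (k + i)" using kept_invariant[OF kept] by blast
  then have z: "z \<in> X k" using p by force
  have "p' ! i \<in> X (Suc k + i)" if "i < length p'" for i using pel[rule_format, of "Suc i"] p that by simp
  then have pcs: "p' @ cs \<in> seqs X (Suc k) n"
    using append_in_seqs[of "Suc k" p' n cs X] cs s p by simp
  show ?thesis
  proof (cases "z \<in> Pos Q S X obs k zp")
    case False
    then show ?thesis using Mog_I2[OF z False] pcs p by simp
  next
    case True
    have "p' @ cs \<in> opt Q S X Os obs n (Suc k) z"
    proof (cases "p' = []")
      case True
      then show ?thesis using argmax_in_opt[OF k z] cs cmax s p by simp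
    next
      case False
      then obtain r0 where "p @ r0 \<in> Mog Q S X Os obs n k zp"
        using kept_invariant[OF kept] p by (cases p') auto
      then have "p' @ r0 \<in> opt Q S X Os obs n (Suc k) z" using Mog_D[of z "p' @ r0"] \<open>z \<in> Pos Q S X obs k zp\<close> p by simp
      then have r0: "p' @ r0 \<in> seqs X (Suc k) n" "\<forall>y\<in>seqs X (Suc k) n. lower_obs (Suc k) z (ind_diff y (p' @ r0)) \<le> 0"
        using opt_iff[of "Suc k"] k by auto
      have "lower_obs (Suc k) z (ind_diff y (p' @ cs)) \<le> 0" if "y \<in> seqs X (Suc k) n" for y
        using lower_obs_ind_diff_append[of "Suc k" z p' r0 cs y] z r0 pcs cmax s p that by simp
      then show ?thesis using opt_iff[of "Suc k"] k pcs by simp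
    qed
    then show ?thesis using Mog_I1[OF True] p by simp
  qed
qed

lemma kept_extension_exists:
  assumes kept: "kept Q S X Os obs n k zp p" and k: "1 \<le> k" "k < n"
    and s: "s = k + length p" "s \<le> n"
  shows "\<exists>x\<in>X s. (\<exists>r. p @ [x] @ r \<in> Mog Q S X Os obs n k zp) \<and>
                   alpha_max Q S X obs n s x \<ge> alpha_opt Q S X obs n k zp (p @ [x])"
proof -
  obtain cs where cs: "cs \<in> seqs X s n"
    and cmax: "\<forall>c\<in>seqs X s n. path_weight s (last p) c \<le> path_weight s (last p) cs"
    using ex_argmax[OF finite_seqs_X seqs_X_nonempty, of s] k s by auto
  then obtain x r where xr: "cs = x # r" "x \<in> X s" using seqs_ConsE[OF cs s(2)] by blast
  then have "alpha_opt Q S X obs n k zp (p @ [x]) \<le> alpha_max Q S X obs n s x"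
    using alpha_opt_snoc_argmax[OF kept k(1) s] cs cmax by simp
  moreover have "p @ [x] @ r \<in> Mog Q S X Os obs n k zp"
    using append_argmax_in_Mog[OF kept k s cs cmax] xr by simp
  ultimately show ?thesis using xr by blast
qed

end

theorem theorem4:
  fixes Q :: "nat \<Rightarrow> 'x \<Rightarrow> ('x \<Rightarrow> real) \<Rightarrow> real"
    and S :: "nat \<Rightarrow> 'x \<Rightarrow> ('o \<Rightarrow> real) \<Rightarrow> real"
    and X :: "nat \<Rightarrow> 'x set" and Os :: "nat \<Rightarrow> 'o set"
    and obs :: "nat \<Rightarrow> 'o" and n k s :: nat and x0 zp :: 'x and p :: "'x list"
  assumes n: "n \<ge> 1"
    and X0: "X 0 = {x0}"
    and finX: "\<And>i. 1 \<le> i \<Longrightarrow> i \<le> n \<Longrightarrow> finite (X i) \<and> X i \<noteq> {}"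
    and finO: "\<And>i. 1 \<le> i \<Longrightarrow> i \<le> n \<Longrightarrow> finite (Os i) \<and> Os i \<noteq> {}"
    and obs: "\<And>i. 1 \<le> i \<Longrightarrow> i \<le> n \<Longrightarrow> obs i \<in> Os i"
    and cohQ: "\<And>i z. 1 \<le> i \<Longrightarrow> i \<le> n \<Longrightarrow> z \<in> X (i - 1) \<Longrightarrow> coherent_lp (X i) (Q i z)"
    and cohS: "\<And>i z. 1 \<le> i \<Longrightarrow> i \<le> n \<Longrightarrow> z \<in> X i \<Longrightarrow> coherent_lp (Os i) (S i z)"
    and posQ: "\<And>i z y. 1 \<le> i \<Longrightarrow> i \<le> n \<Longrightarrow> z \<in> X (i - 1) \<Longrightarrow> y \<in> X i
                 \<Longrightarrow> upper (Q i z) (ind y) > 0"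
    and posS: "\<And>i z ob. 1 \<le> i \<Longrightarrow> i \<le> n \<Longrightarrow> z \<in> X i \<Longrightarrow> ob \<in> Os i
                 \<Longrightarrow> upper (S i z) (ind ob) > 0"
    and k: "1 \<le> k" "k \<le> n - 1"
    and zp: "zp \<in> X (k - 1)"
    and s: "k \<le> s" "s \<le> n"
    and p: "length p = s - k"
    and kept: "p = [] \<or> kept Q S X Os obs n k zp p"
  shows "\<exists>x \<in> X s. (\<exists>r. p @ [x] @ r \<in> Mog Q S X Os obs n k zp) \<and>
                   alpha_max Q S X obs n s x \<ge> alpha_opt Q S X obs n k zp (p @ [x])"
proof -
  interpret imprecise_hmm Q S X Os obs n
    by (rule imprecise_hmm.intro[OF n finX finO obs cohQ cohS posQ posS])
  have kn: "k < n" using k n by simp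
  show ?thesis
  proof (cases "p = []")
    case True
    then have "s = k" using p s by simp
    then show ?thesis using first_kept_exists[OF k(1) kn zp] True by simp
  next
    case False
    then have "kept Q S X Os obs n k zp p" and "s = k + length p" using kept p s by auto
    then show ?thesis using kept_extension_exists k(1) kn s(2) by blast
  qed
qed

end
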